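(* Let $\gamma=(\gamma_1,\dots,\gamma_b)$ be a parallel map on $V=V_1\oplus\cdots\oplus V_b$, $V_i\cong(\mathbb F_2)^m$ with $m\ge4$, and $0\gamma=0$. Suppose every $\gamma_i$ is differentially $4$-uniform and satisfies $\hat n(\gamma_i)=0$. If $\gamma$ maps $\mathcal{LA}_U(W_1|W_2)$ onto a non-trivial partition $\mathcal{LA}_{U'}(W_1'|W_2')$, where $J_U\cap J_{U'}=\emptyset$, then $W_1,W_2,W_1',W_2'$ are walls and $W_1=W_1'=W_2=W_2'$; in particular both partitions are linear.
   Context: Let $b>1$, $n=mb$, $V=(\mathbb F_2)^n=V_1\oplus\cdots\oplus V_b$, $V_i\cong(\mathbb F_2)^m$. Permutations act on the right. A parallel map is $\gamma\in\mathrm{Sym}(V)$ with $(v_1\oplus\cdots\oplus v_b)\gamma=v_1\gamma_1\oplus\cdots\oplus v_b\gamma_b$, $\gamma_i\in\mathrm{Sym}(V_i)$. A wall is $\bigoplus_{i\in I}V_i$ with $\emptyset\ne I\subsetneq\{1,\dots,b\}$. For a subspace $U$ of dimension $n-1$, $J_U=\{j:V_j\cap U\subsetneq V_j\}$. For $f:(\mathbb F_2)^m\to(\mathbb F_2)^m$, $\hat f_a(x)=f(x+a)+f(x)$; $f$ is differentially $\delta$-uniform if $\delta=\max_{a\ne0,b}|\{x:\hat f_a(x)=b\}|$; $\hat n(f)=\max_{a\ne0}|\{v\ne0: x\mapsto\langle\hat f_a(x),v\rangle\text{ is constant}\}|$ with $\langle\cdot,\cdot\rangle$ the standard dot product. A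 permutation maps $\mathcal A$ onto $\mathcal B$ if it sends the blocks of $\mathcal A$ exactly onto those of $\mathcal B$; trivial partitions are the singleton partition and $\{V\}$. $\mathcal L(W)=\{W+v:v\in V\}$ (linear partition). For subspaces $W_1,W_2\subseteq U$, $\mathcal{LA}_U(W_1|W_2)=\{W_1+v:v\in U\}\cup\{(W_2+\bar v)+v:v\in U\}$ for any $\bar v\in V\setminus U$. *)

theory Defs
  imports Main
begin

text \<open>Vectors of (F_2)^k are modelled as functions nat => bool vanishing outside {..<k};
  True = 1, False = 0. Addition over F_2 is pointwise exclusive or.\<close>

definition vec :: "nat \<Rightarrow> (nat \<Rightarrow> bool) set" where
  "vec k = {v. \<forall>j\<ge>k. \<not> v j}"

definition zero :: "nat \<Rightarrow> bool" where
  "zero = (\<lambda>_. False)"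

definition vadd :: "(nat \<Rightarrow> bool) \<Rightarrow> (nat \<Rightarrow> bool) \<Rightarrow> (nat \<Rightarrow> bool)" where
  "vadd u v = (\<lambda>j. u j \<noteq> v j)"

definition ip :: "nat \<Rightarrow> (nat \<Rightarrow> bool) \<Rightarrow> (nat \<Rightarrow> bool) \<Rightarrow> bool" where
  "ip k u v = odd (card {j. j < k \<and> u j \<and> v j})"

definition subspace :: "nat \<Rightarrow> (nat \<Rightarrow> bool) set \<Rightarrow> bool" where
  "subspace k S \<longleftrightarrow> S \<subseteq> vec k \<and> zero \<in> S \<and> (\<forall>u\<in>S. \<forall>v\<in>S. vadd u v \<in> S)"

definition coset :: "(nat \<Rightarrow> bool) set \<Rightarrow> (nat \<Rightarrow> bool) \<Rightarrow> (nat \<Rightarrow> bool) set" where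
  "coset W v = (\<lambda>w. vadd w v) ` W"

text \<open>Block decomposition V = V_0 + ... + V_(b-1), block i occupying coordinates
  i*m .. i*m+m-1 of V = (F_2)^(m*b). Blocks are indexed from 0.\<close>
definition blk :: "nat \<Rightarrow> nat \<Rightarrow> (nat \<Rightarrow> bool) \<Rightarrow> (nat \<Rightarrow> bool)" where
  "blk m i v = (\<lambda>j. if j < m then v (i * m + j) else False)"

definition block :: "nat \<Rightarrow> nat \<Rightarrow> nat \<Rightarrow> (nat \<Rightarrow> bool) set" where
  "block m b i = {v \<in> vec (m * b). \<forall>k. v k \<longrightarrow> k div m = i}"

definition par :: "nat \<Rightarrow> nat \<Rightarrow> (nat \<Rightarrow> (nat \<Rightarrow> bool) \<Rightarrow> (nat \<Rightarrow> bool)) \<Rightarrow> (nat \<Rightarrow> bool) \<Rightarrow> (nat \<Rightarrow> bool)" where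
  "par m b g v = (\<lambda>k. if k < m * b then g (k div m) (blk m (k div m) v) (k mod m) else False)"

definition wall :: "nat \<Rightarrow> nat \<Rightarrow> (nat \<Rightarrow> bool) set \<Rightarrow> bool" where
  "wall m b W \<longleftrightarrow> (\<exists>I. I \<noteq> {} \<and> I \<subset> {..<b} \<and>
      W = {v \<in> vec (m * b). \<forall>k. v k \<longrightarrow> k div m \<in> I})"

definition J :: "nat \<Rightarrow> nat \<Rightarrow> (nat \<Rightarrow> bool) set \<Rightarrow> nat set" where
  "J m b U = {j. j < b \<and> block m b j \<inter> U \<subset> block m b j}"

definition fder :: "((nat \<Rightarrow> bool) \<Rightarrow> (nat \<Rightarrow> bool)) \<Rightarrow> (nat \<Rightarrow> bool) \<Rightarrow> (nat \<Rightarrow> bool) \<Rightarrow> (nat \<Rightarrow> bool)" where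
  "fder f a x = vadd (f (vadd x a)) (f x)"

definition diff_unif :: "nat \<Rightarrow> ((nat \<Rightarrow> bool) \<Rightarrow> (nat \<Rightarrow> bool)) \<Rightarrow> nat" where
  "diff_unif m f = Max {card {x \<in> vec m. fder f a x = c} | a c.
      a \<in> vec m \<and> a \<noteq> zero \<and> c \<in> vec m}"

definition nhat :: "nat \<Rightarrow> ((nat \<Rightarrow> bool) \<Rightarrow> (nat \<Rightarrow> bool)) \<Rightarrow> nat" where
  "nhat m f = Max {card {v \<in> vec m. v \<noteq> zero \<and>
        (\<exists>c. \<forall>x\<in>vec m. ip m (fder f a x) v = c)} | a. a \<in> vec m \<and> a \<noteq> zero}"

definition lin_part :: "nat \<Rightarrow> (nat \<Rightarrow> bool) set \<Rightarrow> (nat \<Rightarrow> bool) set set" where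
  "lin_part n W = {coset W v | v. v \<in> vec n}"

definition LA :: "nat \<Rightarrow> (nat \<Rightarrow> bool) set \<Rightarrow> (nat \<Rightarrow> bool) set \<Rightarrow> (nat \<Rightarrow> bool) set
    \<Rightarrow> (nat \<Rightarrow> bool) set set" where
  "LA n U W1 W2 = (let vb = (SOME v. v \<in> vec n \<and> v \<notin> U) in
     {coset W1 v | v. v \<in> U} \<union> {coset (coset W2 vb) v | v. v \<in> U})"

definition maps_onto :: "((nat \<Rightarrow> bool) \<Rightarrow> (nat \<Rightarrow> bool)) \<Rightarrow> (nat \<Rightarrow> bool) set set
    \<Rightarrow> (nat \<Rightarrow> bool) set set \<Rightarrow> bool" where
  "maps_onto g A B \<longleftrightarrow> (\<lambda>X. g ` X) ` A = B"

definition trivial_part :: "nat \<Rightarrow> (nat \<Rightarrow> bool) set set \<Rightarrow> bool" where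
  "trivial_part n P \<longleftrightarrow> P = {{v} | v. v \<in> vec n} \<or> P = {vec n}"

end

theory Submission
  imports Defs
begin

text \<open>
  Since \<gamma> is a bijection mapping classes onto classes, x and y are equivalent in
  LA_U(W1|W2) iff \<gamma> x and \<gamma> y are equivalent in LA_U'(W1'|W2'). Take a in W1 \<union> W2 and a block
  V_j with a_j \<noteq> 0. Moving a base point x inside V_j, the vectors \<gamma>(x + a) + \<gamma> x change by values
  of the derivative of \<gamma>_j in direction a_j, which by n^(\<gamma>_j) = 0 escape every proper subspace of V_j.
  If V_j \<subseteq> U but V_j \<subseteq> U' fails, this puts V_j inside U', a contradiction. If V_j \<subseteq> U'
  but V_j \<subseteq> U fails, \<gamma>_j maps the LA partition that U, W1, W2 cut out on V_j onto the linear
  partition L(W1' \<inter> V_j); counting with differential 4-uniformity forces W1' \<inter> V_j = 0, and then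
  the derivative in direction a_j would be constant on half of V_j, again impossible. Hence W1 and
  W2 live on blocks inside U \<inter> U', and the derivative argument, started at base points on suitable
  sides of U and U', puts these whole blocks into W1' and W2'. Comparing cardinalities (\<gamma> maps the
  class W1 onto W1' and a class W2 + x onto W2' + \<gamma> x) gives W1 = W1' = W2 = W2', a wall.
\<close>

section \<open>Vectors over F_2\<close>

lemma vadd_comm: "vadd x y = vadd y x"
  by (auto simp: vadd_def fun_eq_iff)

lemma vadd_assoc: "vadd (vadd x y) z = vadd x (vadd y z)"
  by (auto simp: vadd_def fun_eq_iff)

lemma vadd_left_commute: "vadd x (vadd y z) = vadd y (vadd x z)"
  by (auto simp: vadd_def fun_eq_iff)

lemmas vadd_ac = vadd_assoc vadd_comm vadd_left_commute

lemma vadd_self [simp]: "vadd x x = zero"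
  by (auto simp: vadd_def zero_def fun_eq_iff)

lemma vadd_zero [simp]: "vadd x zero = x" "vadd zero x = x"
  by (auto simp: vadd_def zero_def fun_eq_iff)

lemma vadd_cancel [simp]:
  "vadd x (vadd x y) = y" "vadd (vadd y x) x = y" "vadd x (vadd y x) = y" "vadd (vadd x y) x = y"
  by (auto simp: vadd_def fun_eq_iff)

lemma vadd_eq_zero_iff: "vadd x y = zero \<longleftrightarrow> x = y"
  by (auto simp: vadd_def zero_def fun_eq_iff)

lemma vadd_eq_self_iff [simp]: "vadd x y = x \<longleftrightarrow> y = zero"
  by (auto simp: vadd_def zero_def fun_eq_iff)

lemma vadd_left_inj [simp]: "vadd x y = vadd x z \<longleftrightarrow> y = z"
  by (auto simp: vadd_def fun_eq_iff)

lemma vadd_right_inj [simp]: "vadd y x = vadd z x \<longleftrightarrow> y = z"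
  by (auto simp: vadd_def fun_eq_iff)

lemma vadd_swap: "vadd p q = vadd p' q' \<Longrightarrow> vadd p p' = vadd q q'"
  by (auto simp: vadd_def fun_eq_iff)

lemma vadd_vec [simp, intro]: "x \<in> vec k \<Longrightarrow> y \<in> vec k \<Longrightarrow> vadd x y \<in> vec k"
  by (auto simp: vec_def vadd_def)

lemma zero_vec [simp, intro]: "zero \<in> vec k"
  by (auto simp: vec_def zero_def)

lemma vec_less: "x \<in> vec k \<Longrightarrow> x j \<Longrightarrow> j < k"
  unfolding vec_def using not_less by blast

lemma vec_eq_indicator_image: "vec k = (\<lambda>S j. j \<in> S) ` Pow {..<k}"
proof
  show "vec k \<subseteq> (\<lambda>S j. j \<in> S) ` Pow {..<k}"
  proof
    fix v assume "v \<in> vec k"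
    hence "v = (\<lambda>j. j \<in> {j. v j})" "{j. v j} \<in> Pow {..<k}"
      by (auto simp: vec_def) (meson not_le)
    thus "v \<in> (\<lambda>S j. j \<in> S) ` Pow {..<k}" by blast
  qed
qed (auto simp: vec_def)

lemma finite_vec [simp]: "finite (vec k)"
  by (simp add: vec_eq_indicator_image)

lemma card_vec: "card (vec k) = 2 ^ k"
proof -
  have "inj_on (\<lambda>S j. j \<in> S) (Pow {..<k})"
    by (auto simp: inj_on_def fun_eq_iff)
  thus ?thesis by (simp add: vec_eq_indicator_image card_image card_Pow)
qed

lemma mem_coset_iff: "y \<in> coset W x \<longleftrightarrow> vadd y x \<in> W"
  unfolding coset_def by (auto intro: image_eqI[of y _ "vadd y x"])

lemma coset_coset: "coset (coset W p) q = coset W (vadd p q)"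
  by (auto simp: mem_coset_iff vadd_ac)

lemma coset_zero [simp]: "coset W zero = W"
  by (auto simp: mem_coset_iff)

lemma card_coset: "card (coset W p) = card W"
  unfolding coset_def by (rule card_image) (simp add: inj_on_def)

lemma subspace_vec: "subspace k S \<Longrightarrow> S \<subseteq> vec k"
  by (simp add: subspace_def)

lemma subspace_zero: "subspace k S \<Longrightarrow> zero \<in> S"
  by (simp add: subspace_def)

lemma subspace_add: "subspace k S \<Longrightarrow> x \<in> S \<Longrightarrow> y \<in> S \<Longrightarrow> vadd x y \<in> S"
  by (simp add: subspace_def)

lemma subspace_vadd_iff:
  assumes "subspace k S" "x \<in> S"
  shows "vadd x y \<in> S \<longleftrightarrow> y \<in> S" "vadd y x \<in> S \<longleftrightarrow> y \<in> S"
  using subspace_add[OF assms] subspace_add[OF assms(1) _ assms(2)]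
  by (metis vadd_cancel(1), metis vadd_cancel(2))

lemma subspace_finite: "subspace k S \<Longrightarrow> finite S"
  by (rule finite_subset[OF subspace_vec finite_vec])

lemma subspace_coset_extension:
  assumes S: "subspace k H" and x: "x \<in> vec k"
  shows "subspace k (H \<union> coset H x)"
  unfolding subspace_def
proof (intro conjI ballI)
  show "H \<union> coset H x \<subseteq> vec k"
    using subspace_vec[OF S] x by (auto simp: coset_def)
  show "zero \<in> H \<union> coset H x"
    using subspace_zero[OF S] by simp
next
  fix u w assume u: "u \<in> H \<union> coset H x" and w: "w \<in> H \<union> coset H x"
  have "vadd u (vadd w x) = vadd (vadd u w) x" "vadd (vadd u x) w = vadd (vadd u w) x"
    "vadd (vadd u x) (vadd w x) = vadd u w"
    by (simp_all add: vadd_ac)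
  with u w show "vadd u w \<in> H \<union> coset H x"
    unfolding Un_iff mem_coset_iff
    using subspace_add[OF S, of u w] subspace_add[OF S, of u "vadd w x"]
      subspace_add[OF S, of "vadd u x" w] subspace_add[OF S, of "vadd u x" "vadd w x"]
    by auto
qed

lemma card_mult_le_of_inter_trivial:
  assumes A: "subspace k A" and B: "subspace k B" and H: "subspace k H"
    and AH: "A \<subseteq> H" and BH: "B \<subseteq> H" and AB: "A \<inter> B \<subseteq> {zero}"
  shows "card A * card B \<le> card H"
proof -
  let ?sum = "\<lambda>(p, q). vadd p q"
  have "inj_on ?sum (A \<times> B)"
  proof (rule inj_onI, clarify)
    fix p q p' q' assume p: "p \<in> A" "p' \<in> A" and q: "q \<in> B" "q' \<in> B"
      and eq: "vadd p q = vadd p' q'"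
    have "vadd p p' \<in> A" using subspace_add[OF A p] .
    moreover have "vadd p p' \<in> B" unfolding vadd_swap[OF eq] using subspace_add[OF B q] .
    ultimately have "vadd p p' = zero" using AB by blast
    thus "p = p' \<and> q = q'" using vadd_swap[OF eq] by (simp add: vadd_eq_zero_iff)
  qed
  hence "card (A \<times> B) = card (?sum ` (A \<times> B))" by (rule card_image[symmetric])
  also have "\<dots> \<le> card H"
  proof (rule card_mono[OF subspace_finite[OF H]])
    show "?sum ` (A \<times> B) \<subseteq> H" using AH BH subspace_add[OF H] by auto
  qed
  finally show ?thesis by (simp add: card_cartesian_product)
qed

section \<open>Hyperplanes\<close>

definition hyperplane :: "nat \<Rightarrow> (nat \<Rightarrow> bool) set \<Rightarrow> bool" where
  "hyperplane k H \<longleftrightarrow> subspace k H \<and> card (vec k) = 2 * card H"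

lemma hyperplane_subspace: "hyperplane k H \<Longrightarrow> subspace k H"
  by (simp add: hyperplane_def)

lemma hyperplane_proper: "hyperplane k H \<Longrightarrow> \<exists>v\<in>vec k. v \<notin> H"
  using subspace_vec[of k H] card_vec[of k]
  by (auto simp: hyperplane_def dest: subset_antisym)

lemma hyperplane_of_card:
  assumes S: "subspace k H" and k: "0 < k" and c: "card H = 2 ^ (k - 1)"
  shows "hyperplane k H"
proof -
  have "(2::nat) ^ k = 2 * 2 ^ (k - 1)" using k by (simp add: power_eq_if)
  thus ?thesis using S c by (simp add: hyperplane_def card_vec)
qed

lemma hyperplane_add_outside:
  assumes H: "hyperplane k H" and x: "x \<in> vec k" "x \<notin> H" and y: "y \<in> vec k" "y \<notin> H"
  shows "vadd x y \<in> H"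
proof -
  have S: "subspace k H" and c: "card (vec k) = 2 * card H"
    using H by (auto simp: hyperplane_def)
  have "(\<lambda>u. vadd x u) ` H \<subseteq> vec k - H"
    using x subspace_vec[OF S] subspace_vadd_iff(2)[OF S] by auto
  moreover have "card ((\<lambda>u. vadd x u) ` H) = card (vec k - H)"
    using c subspace_vec[OF S] subspace_finite[OF S]
    by (simp add: card_image inj_on_def card_Diff_subset)
  ultimately have "(\<lambda>u. vadd x u) ` H = vec k - H"
    by (intro card_subset_eq) auto
  with y obtain u where "u \<in> H" "y = vadd x u" by blast
  thus ?thesis by simp
qed

lemma hyperplaneI:
  assumes S: "subspace k H" and h: "h \<in> vec k" "h \<notin> H"
    and outside: "\<And>x y. x \<in> vec k - H \<Longrightarrow> y \<in> vec k - H \<Longrightarrow> vadd x y \<in> H"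
  shows "hyperplane k H"
proof -
  have "(\<lambda>u. vadd h u) ` H = vec k - H"
  proof
    show "(\<lambda>u. vadd h u) ` H \<subseteq> vec k - H"
      using h subspace_vec[OF S] subspace_vadd_iff(2)[OF S] by auto
    show "vec k - H \<subseteq> (\<lambda>u. vadd h u) ` H"
    proof
      fix y assume "y \<in> vec k - H"
      hence "vadd h y \<in> H" using outside h by auto
      thus "y \<in> (\<lambda>u. vadd h u) ` H" by (rule rev_image_eqI) simp
    qed
  qed
  moreover have "card ((\<lambda>u. vadd h u) ` H) = card H"
    by (rule card_image) (auto simp: inj_on_def)
  ultimately have "card (vec k - H) = card H" by simp
  moreover have "card (vec k - H) = card (vec k) - card H" "card H \<le> card (vec k)"
    using subspace_vec[OF S] subspace_finite[OF S] by (auto simp: card_Diff_subset card_mono)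
  ultimately show ?thesis using S by (simp add: hyperplane_def)
qed

lemma card_hyperplane: "hyperplane k H \<Longrightarrow> 2 * card H = 2 ^ k"
  by (simp add: hyperplane_def card_vec)

lemma card_compl_hyperplane: "hyperplane k H \<Longrightarrow> card (vec k - H) = card H"
  using subspace_vec[of k H] subspace_finite[of k H]
  by (simp add: hyperplane_def card_Diff_subset)

lemma hyperplane_compl_vadd:
  assumes H: "hyperplane k H" and x: "x \<in> vec k" and y: "y \<in> vec k"
  shows "(vadd x y \<notin> H) = ((x \<notin> H) \<noteq> (y \<notin> H))"
proof (cases "x \<in> H")
  case True
  thus ?thesis using subspace_vadd_iff(1)[OF hyperplane_subspace[OF H]] by simp
next
  case False
  thus ?thesis
    using hyperplane_add_outside[OF H x False y] subspace_vadd_iff(2)[OF hyperplane_subspace[OF H]]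
    by auto
qed

lemma ip_vadd: "ip k (vadd x y) v = (ip k x v \<noteq> ip k y v)"
proof -
  let ?A = "{j. j < k \<and> x j \<and> v j}" and ?B = "{j. j < k \<and> y j \<and> v j}"
  have C: "{j. j < k \<and> vadd x y j \<and> v j} = (?A - ?B) \<union> (?B - ?A)"
    by (auto simp: vadd_def)
  have "card {j. j < k \<and> vadd x y j \<and> v j} = card (?A - ?B) + card (?B - ?A)"
    unfolding C by (rule card_Un_disjoint) auto
  moreover have "card ?A = card (?A - ?B) + card (?A \<inter> ?B)"
    "card ?B = card (?B - ?A) + card (?A \<inter> ?B)"
    by (simp_all add: card_Diff_subset_Int card_mono Int_commute)
  ultimately show ?thesis unfolding ip_def by presburger
qed

lemma ip_zero [simp]: "ip k zero v = False" "ip k v zero = False"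
  by (simp_all add: ip_def zero_def)

definition unit_vec :: "nat \<Rightarrow> nat \<Rightarrow> bool" where
  "unit_vec i = (\<lambda>j. j = i)"

definition trunc :: "nat \<Rightarrow> (nat \<Rightarrow> bool) \<Rightarrow> (nat \<Rightarrow> bool)" where
  "trunc t x = (\<lambda>j. j < t \<and> x j)"

lemma trunc_0: "trunc 0 x = zero"
  by (simp add: trunc_def zero_def)

lemma trunc_Suc: "trunc (Suc t) x = vadd (trunc t x) (if x t then unit_vec t else zero)"
  by (auto simp: trunc_def unit_vec_def vadd_def zero_def fun_eq_iff less_Suc_eq)

lemma trunc_full: "x \<in> vec k \<Longrightarrow> trunc k x = x"
  by (auto simp: trunc_def vec_def fun_eq_iff) (meson not_le)

lemma trunc_vec: "x \<in> vec k \<Longrightarrow> trunc t x \<in> vec k"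
  by (auto simp: trunc_def vec_def)

lemma unit_vec_vec: "i < k \<Longrightarrow> unit_vec i \<in> vec k"
  by (auto simp: unit_vec_def vec_def)

lemma ip_unit_vec: "i < k \<Longrightarrow> ip k (unit_vec i) v = v i"
proof -
  assume "i < k"
  hence "{j. j < k \<and> unit_vec i j \<and> v j} = (if v i then {i} else {})"
    by (auto simp: unit_vec_def)
  thus ?thesis by (simp add: ip_def)
qed

text \<open>A hyperplane is the kernel of the functional whose coefficients indicate which unit
  vectors lie outside it; additivity of x \<mapsto> [x \<notin> H] is checked coordinate by coordinate.\<close>

lemma hyperplane_kernel:
  assumes H: "hyperplane k H"
  shows "\<exists>v\<in>vec k. v \<noteq> zero \<and> (\<forall>x\<in>vec k. ip k x v = (x \<notin> H))"
proof -
  have S: "subspace k H" using hyperplane_subspace[OF H] .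
  define v where "v = (\<lambda>i. i < k \<and> unit_vec i \<notin> H)"
  have trunc_ip: "ip k (trunc t x) v = (trunc t x \<notin> H)" if x: "x \<in> vec k" and t: "t \<le> k" for x t
    using t
  proof (induction t)
    case 0
    thus ?case using subspace_zero[OF S] by (simp add: trunc_0)
  next
    case (Suc t)
    let ?e = "if x t then unit_vec t else zero"
    have e: "?e \<in> vec k" "ip k ?e v = (?e \<notin> H)"
    proof -
      show "?e \<in> vec k" using Suc.prems unit_vec_vec by simp
      show "ip k ?e v = (?e \<notin> H)"
        using Suc.prems ip_unit_vec[of t k v] subspace_zero[OF S] by (simp add: v_def)
    qed
    have "ip k (trunc t x) v = (trunc t x \<notin> H)" using Suc by simp
    thus ?case
      unfolding trunc_Suc ip_vadd hyperplane_compl_vadd[OF H trunc_vec[OF x] e(1)] e(2) by simp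
  qed
  have kernel: "\<forall>x\<in>vec k. ip k x v = (x \<notin> H)"
    using trunc_ip[of _ k] trunc_full by auto
  moreover have "v \<noteq> zero"
  proof
    assume "v = zero"
    thus False using kernel hyperplane_proper[OF H] by simp
  qed
  moreover have "v \<in> vec k" by (auto simp: v_def vec_def)
  ultimately show ?thesis by blast
qed

text \<open>A maximal proper subspace containing T is a hyperplane: otherwise adjoining a coset
  of it would give a larger proper one.\<close>

lemma proper_subspace_annihilator:
  assumes T: "subspace k T" and proper: "T \<noteq> vec k"
  shows "\<exists>v\<in>vec k. v \<noteq> zero \<and> (\<forall>t\<in>T. \<not> ip k t v)"
proof -
  define P where "P = {H. subspace k H \<and> T \<subseteq> H \<and> H \<noteq> vec k}"
  have fin: "finite P"
    by (rule finite_subset[of _ "Pow (vec k)"]) (auto simp: P_def subspace_def)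
  have "T \<in> P" using T proper by (simp add: P_def)
  hence "Max (card ` P) \<in> card ` P" using fin by (intro Max_in) auto
  then obtain H where HP: "H \<in> P" and cH: "card H = Max (card ` P)" by auto
  have maxH: "card H' \<le> card H" if "H' \<in> P" for H'
    unfolding cH using fin that by simp
  have S: "subspace k H" and TH: "T \<subseteq> H" and HV: "H \<noteq> vec k"
    using HP by (auto simp: P_def)
  have outside: "vadd x y \<in> H" if x: "x \<in> vec k - H" and y: "y \<in> vec k - H" for x y
  proof -
    have ext: "subspace k (H \<union> coset H x)"
      using subspace_coset_extension[OF S] x by blast
    have "x \<in> coset H x" using subspace_zero[OF S] by (simp add: mem_coset_iff)
    hence "card H < card (H \<union> coset H x)"
      using x subspace_finite[OF ext] by (intro psubset_card_mono) auto
    hence "H \<union> coset H x \<notin> P" using maxH by force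
    hence "H \<union> coset H x = vec k" using ext TH by (auto simp: P_def)
    hence "vadd y x \<in> H" using y by (auto simp: mem_coset_iff)
    thus ?thesis by (simp add: vadd_comm)
  qed
  obtain h where "h \<in> vec k" "h \<notin> H" using HV subspace_vec[OF S] by blast
  with S outside have "hyperplane k H" by (intro hyperplaneI)
  then obtain v where "v \<in> vec k" "v \<noteq> zero" "\<forall>x\<in>vec k. ip k x v = (x \<notin> H)"
    using hyperplane_kernel by blast
  thus ?thesis using TH subspace_vec[OF T] by blast
qed

section \<open>Blocks\<close>

definition blk_upd :: "nat \<Rightarrow> nat \<Rightarrow> (nat \<Rightarrow> bool) \<Rightarrow> (nat \<Rightarrow> bool) \<Rightarrow> (nat \<Rightarrow> bool)" where
  "blk_upd m j u x = (\<lambda>k. if k div m = j then u (k mod m) else x k)"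

abbreviation blk_emb :: "nat \<Rightarrow> nat \<Rightarrow> (nat \<Rightarrow> bool) \<Rightarrow> (nat \<Rightarrow> bool)" where
  "blk_emb m j u \<equiv> blk_upd m j u zero"

lemma blk_vec [simp]: "blk m i v \<in> vec m"
  by (simp add: blk_def vec_def)

lemma blk_upd_same [simp]: "0 < m \<Longrightarrow> u \<in> vec m \<Longrightarrow> blk m j (blk_upd m j u x) = u"
  by (auto simp: blk_def blk_upd_def fun_eq_iff vec_def)

lemma blk_upd_other [simp]: "0 < m \<Longrightarrow> i \<noteq> j \<Longrightarrow> blk m i (blk_upd m j u x) = blk m i x"
  by (auto simp: blk_def blk_upd_def fun_eq_iff)

lemma div_less_of_less_mult: "0 < (m::nat) \<Longrightarrow> k < m * b \<Longrightarrow> k div m < b"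
  by (simp add: div_less_iff_less_mult mult.commute)

lemma blk_upd_vec [simp, intro]:
  assumes m: "0 < m" and j: "j < b" and x: "x \<in> vec (m * b)"
  shows "blk_upd m j u x \<in> vec (m * b)"
  unfolding vec_def
proof (intro CollectI allI impI)
  fix k assume k: "m * b \<le> k"
  hence "k div m \<noteq> j" using div_le_mono[of "m * b" k m] m j by simp
  thus "\<not> blk_upd m j u x k" using x k by (simp add: blk_upd_def vec_def)
qed

lemma blk_vadd: "blk m i (vadd x y) = vadd (blk m i x) (blk m i y)"
  by (auto simp: blk_def vadd_def fun_eq_iff)

lemma blk_zero [simp]: "blk m i zero = zero"
  by (auto simp: blk_def zero_def fun_eq_iff)

lemma blk_at: "0 < m \<Longrightarrow> blk m (k div m) x (k mod m) = x k"
  by (simp add: blk_def)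

lemma vec_eqI_blk:
  assumes m: "0 < m" and x: "x \<in> vec (m * b)" and y: "y \<in> vec (m * b)"
    and eq: "\<And>i. i < b \<Longrightarrow> blk m i x = blk m i y"
  shows "x = y"
proof
  fix k show "x k = y k"
  proof (cases "k < m * b")
    case True
    hence "blk m (k div m) x (k mod m) = blk m (k div m) y (k mod m)"
      using eq div_less_of_less_mult[OF m] by simp
    thus ?thesis using blk_at[OF m] by simp
  next
    case False
    thus ?thesis using x y by (auto simp: vec_def)
  qed
qed

lemma blk_upd_vadd: "vadd (blk_upd m j u x) (blk_upd m j u' x') = blk_upd m j (vadd u u') (vadd x x')"
  by (auto simp: blk_upd_def vadd_def fun_eq_iff)

lemma blk_upd_zero [simp]: "blk_upd m j zero zero = zero"
  by (auto simp: blk_upd_def zero_def fun_eq_iff)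

lemma blk_upd_eq_vadd_emb:
  assumes m: "0 < m" and z: "blk m j x = zero"
  shows "blk_upd m j u x = vadd x (blk_emb m j u)"
proof
  fix k show "blk_upd m j u x k = vadd x (blk_emb m j u) k"
  proof (cases "k div m = j")
    case True
    hence "\<not> x k" using blk_at[OF m, of k x] z by (simp add: zero_def)
    thus ?thesis using True by (simp add: blk_upd_def vadd_def)
  next
    case False
    thus ?thesis by (simp add: blk_upd_def vadd_def zero_def)
  qed
qed

lemma subspace_mem_from_blocks:
  assumes m: "0 < m" and S: "subspace (m * b) S" and x: "x \<in> vec (m * b)"
    and blocks: "\<And>i. i < b \<Longrightarrow> blk_emb m i (blk m i x) \<in> S"
  shows "x \<in> S"
proof -
  define prefix where "prefix t = (\<lambda>k. k div m < t \<and> x k)" for t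
  have prefix_Suc: "prefix (Suc t) = vadd (prefix t) (blk_emb m t (blk m t x))" for t
  proof
    fix k
    have "blk m t x (k mod m) = x k" if "k div m = t" using blk_at[OF m, of k x] that by simp
    thus "prefix (Suc t) k = vadd (prefix t) (blk_emb m t (blk m t x)) k"
      by (auto simp: prefix_def vadd_def blk_upd_def zero_def less_Suc_eq)
  qed
  have "t \<le> b \<Longrightarrow> prefix t \<in> S" for t
  proof (induction t)
    case 0
    have "prefix 0 = zero" by (simp add: prefix_def zero_def)
    thus ?case using subspace_zero[OF S] by simp
  next
    case (Suc t)
    thus ?case unfolding prefix_Suc using blocks subspace_add[OF S] by simp
  qed
  moreover have "prefix b = x"
  proof
    fix k show "prefix b k = x k"
      using x div_less_of_less_mult[OF m, of k b] by (cases "k < m * b") (auto simp: prefix_def vec_def)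
  qed
  ultimately show ?thesis by force
qed

lemma block_eq_emb_image:
  assumes m: "0 < m" and j: "j < b"
  shows "block m b j = blk_emb m j ` vec m"
proof
  show "block m b j \<subseteq> blk_emb m j ` vec m"
  proof
    fix v assume v: "v \<in> block m b j"
    have "v = blk_emb m j (blk m j v)"
    proof
      fix k show "v k = blk_emb m j (blk m j v) k"
      proof (cases "k div m = j")
        case True
        thus ?thesis using blk_at[OF m, of k v] by (simp add: blk_upd_def)
      next
        case False
        thus ?thesis using v by (auto simp: block_def blk_upd_def zero_def)
      qed
    qed
    thus "v \<in> blk_emb m j ` vec m" using blk_vec[of m j v] by blast
  qed
  show "blk_emb m j ` vec m \<subseteq> block m b j"
  proof
    fix v assume "v \<in> blk_emb m j ` vec m"
    then obtain u where v: "v = blk_emb m j u" by blast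
    have "v \<in> vec (m * b)" unfolding v using m j by simp
    moreover have "\<forall>k. v k \<longrightarrow> k div m = j" unfolding v by (simp add: blk_upd_def zero_def)
    ultimately show "v \<in> block m b j" by (simp add: block_def)
  qed
qed

lemma mem_J_iff:
  assumes m: "0 < m"
  shows "j \<in> J m b U \<longleftrightarrow> j < b \<and> (\<exists>u\<in>vec m. blk_emb m j u \<notin> U)"
proof (cases "j < b")
  case True
  have "j \<in> J m b U \<longleftrightarrow> \<not> block m b j \<subseteq> U" using True unfolding J_def by blast
  thus ?thesis unfolding block_eq_emb_image[OF m True] using True by blast
qed (simp add: J_def)

lemma exists_J:
  assumes m: "0 < m" and S: "subspace (m * b) S" and proper: "S \<noteq> vec (m * b)"
  obtains j where "j \<in> J m b S"
proof -
  have "\<exists>j. j \<in> J m b S"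
  proof (rule ccontr)
    assume none: "\<nexists>j. j \<in> J m b S"
    have "x \<in> S" if "x \<in> vec (m * b)" for x
    proof (rule subspace_mem_from_blocks[OF m S that])
      fix i assume "i < b"
      thus "blk_emb m i (blk m i x) \<in> S" using none mem_J_iff[OF m] blk_vec by blast
    qed
    thus False using proper subspace_vec[OF S] by blast
  qed
  thus ?thesis using that by blast
qed

definition blk_slice :: "nat \<Rightarrow> nat \<Rightarrow> (nat \<Rightarrow> bool) set \<Rightarrow> (nat \<Rightarrow> bool) set" where
  "blk_slice m j S = {u \<in> vec m. blk_emb m j u \<in> S}"

lemma subspace_blk_slice:
  assumes S: "subspace (m * b) S"
  shows "subspace m (blk_slice m j S)"
  unfolding subspace_def blk_slice_def
proof (intro conjI ballI)
  show "zero \<in> {u \<in> vec m. blk_emb m j u \<in> S}" using subspace_zero[OF S] by simp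
next
  fix u v assume "u \<in> {u \<in> vec m. blk_emb m j u \<in> S}" "v \<in> {u \<in> vec m. blk_emb m j u \<in> S}"
  thus "vadd u v \<in> {u \<in> vec m. blk_emb m j u \<in> S}"
    using subspace_add[OF S, of "blk_emb m j u" "blk_emb m j v"] by (simp add: blk_upd_vadd)
qed auto

lemma blk_emb_mem_of_notin_J:
  assumes "0 < m" "j < b" "j \<notin> J m b S" "u \<in> vec m"
  shows "blk_emb m j u \<in> S"
  using assms mem_J_iff by blast

lemma blk_upd_mem_iff:
  assumes m: "0 < m" and S: "subspace k S" and x: "blk m j x = zero" and u: "blk_emb m j u \<in> S"
  shows "blk_upd m j u x \<in> S \<longleftrightarrow> x \<in> S"
  using subspace_vadd_iff(2)[OF S u] by (simp add: blk_upd_eq_vadd_emb[OF m x])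

lemma hyperplane_blk_slice:
  assumes m: "0 < m" and U: "hyperplane (m * b) U" and j: "j \<in> J m b U"
  shows "hyperplane m (blk_slice m j U)"
proof -
  have jb: "j < b" using j mem_J_iff[OF m] by blast
  have S: "subspace m (blk_slice m j U)"
    using subspace_blk_slice[OF hyperplane_subspace[OF U]] .
  obtain h where "h \<in> vec m" "h \<notin> blk_slice m j U"
    using j mem_J_iff[OF m] by (auto simp: blk_slice_def)
  moreover have "vadd x y \<in> blk_slice m j U"
    if "x \<in> vec m - blk_slice m j U" "y \<in> vec m - blk_slice m j U" for x y
  proof -
    have "vadd (blk_emb m j x) (blk_emb m j y) \<in> U"
      using that m jb by (intro hyperplane_add_outside[OF U]) (auto simp: blk_slice_def)
    thus ?thesis using that by (simp add: blk_slice_def blk_upd_vadd)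
  qed
  ultimately show ?thesis using S by (intro hyperplaneI) auto
qed

section \<open>Walls\<close>

definition wall_set :: "nat \<Rightarrow> nat \<Rightarrow> nat set \<Rightarrow> (nat \<Rightarrow> bool) set" where
  "wall_set m b I = {v \<in> vec (m * b). \<forall>k. v k \<longrightarrow> k div m \<in> I}"

definition blk_support :: "nat \<Rightarrow> nat \<Rightarrow> (nat \<Rightarrow> bool) set \<Rightarrow> nat set" where
  "blk_support m b S = {j. j < b \<and> (\<exists>a\<in>S. blk m j a \<noteq> zero)}"

lemma subset_wall_set_blk_support:
  assumes m: "0 < m" and S: "S \<subseteq> vec (m * b)"
  shows "S \<subseteq> wall_set m b (blk_support m b S)"
proof
  fix v assume v: "v \<in> S"
  have "k div m \<in> blk_support m b S" if vk: "v k" for k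
  proof -
    have "v \<in> vec (m * b)" using v S by blast
    hence "k < m * b" using vk by (rule vec_less)
    hence "k div m < b" by (rule div_less_of_less_mult[OF m])
    moreover have "blk m (k div m) v \<noteq> zero"
    proof
      assume "blk m (k div m) v = zero"
      hence "blk m (k div m) v (k mod m) = False" by (simp add: zero_def)
      thus False using vk blk_at[OF m, of k v] by simp
    qed
    ultimately show ?thesis using v unfolding blk_support_def by blast
  qed
  thus "v \<in> wall_set m b (blk_support m b S)" using v S unfolding wall_set_def by blast
qed

lemma wall_set_subset:
  assumes m: "0 < m" and S: "subspace (m * b) S"
    and blocks: "\<And>j w. j \<in> I \<Longrightarrow> w \<in> vec m \<Longrightarrow> blk_emb m j w \<in> S"
  shows "wall_set m b I \<subseteq> S"
proof
  fix v assume v: "v \<in> wall_set m b I"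
  show "v \<in> S"
  proof (rule subspace_mem_from_blocks[OF m S])
    show "v \<in> vec (m * b)" using v by (simp add: wall_set_def)
  next
    fix i assume "i < b"
    show "blk_emb m i (blk m i v) \<in> S"
    proof (cases "i \<in> I")
      case True
      thus ?thesis using blocks by simp
    next
      case False
      have "blk m i v = zero"
      proof
        fix t
        have "\<not> v (i * m + t)" if "t < m"
        proof
          assume "v (i * m + t)"
          moreover have "(i * m + t) div m = i" using that by simp
          ultimately show False using v False unfolding wall_set_def by auto
        qed
        thus "blk m i v t = zero t" by (simp add: blk_def zero_def)
      qed
      thus ?thesis using subspace_zero[OF S] by simp
    qed
  qed
qed

lemma wallI:
  assumes m: "0 < m" and S: "S = wall_set m b (blk_support m b S)"
    and nonzero: "S \<noteq> {zero}" and proper: "S \<noteq> vec (m * b)"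
  shows "wall m b S"
proof -
  define I where "I = blk_support m b S"
  have S_eq: "S = wall_set m b I" using S by (simp add: I_def)
  have "I \<noteq> {}"
  proof
    assume "I = {}"
    hence "S = {zero}" unfolding S_eq wall_set_def using zero_vec[of "m * b"]
      by (auto simp: zero_def fun_eq_iff)
    thus False using nonzero by blast
  qed
  moreover have "I \<noteq> {..<b}"
  proof
    assume full: "I = {..<b}"
    have "k div m \<in> I" if "v \<in> vec (m * b)" "v k" for v k
    proof -
      have "k < m * b" using that by (rule vec_less)
      thus ?thesis using div_less_of_less_mult[OF m] full by simp
    qed
    hence "S = vec (m * b)" unfolding S_eq wall_set_def by blast
    thus False using proper by blast
  qed
  moreover have "I \<subseteq> {..<b}" by (auto simp: I_def blk_support_def)
  ultimately show ?thesis unfolding wall_def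
    by (intro exI[of _ I] conjI) (auto simp: S_eq wall_set_def)
qed

section \<open>Parallel maps\<close>

lemma par_vec [simp, intro]: "par m b g x \<in> vec (m * b)"
  by (simp add: par_def vec_def)

lemma blk_par:
  assumes m: "0 < m" and i: "i < b" and gv: "g i (blk m i x) \<in> vec m"
  shows "blk m i (par m b g x) = g i (blk m i x)"
proof
  fix t show "blk m i (par m b g x) t = g i (blk m i x) t"
  proof (cases "t < m")
    case True
    have "i * m + t < (i + 1) * m" using True by simp
    also have "\<dots> \<le> b * m" using i by (intro mult_le_mono1) simp
    also have "\<dots> = m * b" by (rule mult.commute)
    finally show ?thesis using True m by (simp add: blk_def par_def)
  next
    case False
    thus ?thesis using gv by (simp add: blk_def vec_def)
  qed
qed

lemma par_blk_upd:
  assumes m: "0 < m" and j: "j < b" and u: "u \<in> vec m" and x: "x \<in> vec (m * b)"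
    and gv: "\<And>i w. i < b \<Longrightarrow> w \<in> vec m \<Longrightarrow> g i w \<in> vec m"
  shows "par m b g (blk_upd m j u x) = blk_upd m j (g j u) (par m b g x)"
proof (rule vec_eqI_blk[OF m])
  fix i assume i: "i < b"
  show "blk m i (par m b g (blk_upd m j u x)) = blk m i (blk_upd m j (g j u) (par m b g x))"
    using m i j u gv by (cases "i = j") (simp_all add: blk_par)
qed (use m j in simp_all)

lemma par_blk_emb:
  assumes m: "0 < m" and j: "j < b" and u: "u \<in> vec m"
    and gv: "\<And>i w. i < b \<Longrightarrow> w \<in> vec m \<Longrightarrow> g i w \<in> vec m"
    and par0: "par m b g zero = zero"
  shows "par m b g (blk_emb m j u) = blk_emb m j (g j u)"
  using par_blk_upd[OF m j u zero_vec gv] par0 by simp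

lemma par_zero_components:
  assumes m: "0 < m" and par0: "par m b g zero = zero" and i: "i < b" and gv: "g i zero \<in> vec m"
  shows "g i zero = zero"
  using blk_par[OF m i, of g zero] gv par0 by simp

lemma bij_betw_par:
  assumes m: "0 < m" and bij: "\<And>i. i < b \<Longrightarrow> bij_betw (g i) (vec m) (vec m)"
  shows "bij_betw (par m b g) (vec (m * b)) (vec (m * b))"
proof -
  have gv: "g i w \<in> vec m" if "i < b" "w \<in> vec m" for i w
    using bij_betw_apply[OF bij] that by blast
  have "inj_on (par m b g) (vec (m * b))"
  proof (rule inj_onI)
    fix x y assume x: "x \<in> vec (m * b)" and y: "y \<in> vec (m * b)"
      and eq: "par m b g x = par m b g y"
    show "x = y"
    proof (rule vec_eqI_blk[OF m x y])
      fix i assume i: "i < b"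
      have "g i (blk m i x) = g i (blk m i y)"
        using eq blk_par[OF m i, of g x] blk_par[OF m i, of g y] gv[OF i] by simp
      thus "blk m i x = blk m i y"
        using bij_betw_imp_inj_on[OF bij[OF i]] by (simp add: inj_on_eq_iff)
    qed
  qed
  moreover have "par m b g ` vec (m * b) = vec (m * b)"
    using calculation by (intro endo_inj_surj) auto
  ultimately show ?thesis by (simp add: bij_betw_def)
qed

lemma blk_fder_par:
  assumes m: "0 < m" and i: "i < b" and gv: "\<And>w. w \<in> vec m \<Longrightarrow> g i w \<in> vec m"
  shows "blk m i (fder (par m b g) a y) = fder (g i) (blk m i a) (blk m i y)"
  using m i gv by (simp add: fder_def blk_vadd blk_par)

text \<open>Only the j-th block of the base point moves, so all other blocks of the two derivatives
  coincide and cancel.\<close>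

lemma fder_par_blk_upd:
  assumes m: "0 < m" and j: "j < b" and u: "u \<in> vec m" and u': "u' \<in> vec m"
    and gv: "\<And>i w. i < b \<Longrightarrow> w \<in> vec m \<Longrightarrow> g i w \<in> vec m"
  shows "vadd (fder (par m b g) a (blk_upd m j u x)) (fder (par m b g) a (blk_upd m j u' x))
    = blk_emb m j (vadd (fder (g j) (blk m j a) u) (fder (g j) (blk m j a) u'))"
proof (rule vec_eqI_blk[OF m])
  fix i assume i: "i < b"
  show "blk m i (vadd (fder (par m b g) a (blk_upd m j u x)) (fder (par m b g) a (blk_upd m j u' x)))
    = blk m i (blk_emb m j (vadd (fder (g j) (blk m j a) u) (fder (g j) (blk m j a) u')))"
  proof (cases "i = j")
    case True
    have "vadd (fder (g j) (blk m j a) u) (fder (g j) (blk m j a) u') \<in> vec m"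
      using gv[OF j] u u' by (simp add: fder_def blk_vadd)
    thus ?thesis using True m j u u' gv by (simp add: blk_vadd blk_fder_par)
  next
    case False
    thus ?thesis using m i gv by (simp add: blk_vadd blk_fder_par)
  qed
qed (auto simp: fder_def m j)

section \<open>Differential invariants of a component\<close>

lemma card_fder_fiber_le_diff_unif:
  assumes a: "a \<in> vec m" "a \<noteq> zero" and c: "c \<in> vec m"
  shows "card {x \<in> vec m. fder f a x = c} \<le> diff_unif m f"
proof -
  let ?card = "\<lambda>(a, c). card {x \<in> vec m. fder f a x = c}"
  let ?S = "{card {x \<in> vec m. fder f a x = c} | a c. a \<in> vec m \<and> a \<noteq> zero \<and> c \<in> vec m}"
  have "?S \<subseteq> ?card ` (vec m \<times> vec m)" by auto
  hence "finite ?S" by (rule finite_subset) simp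
  moreover have "card {x \<in> vec m. fder f a x = c} \<in> ?S" using a c by blast
  ultimately show ?thesis unfolding diff_unif_def by (rule Max_ge)
qed

text \<open>If the derivative in direction a took its values in a coset of a proper subspace T,
  a nonzero vector orthogonal to T would make a component of the derivative constant.\<close>

lemma nhat_zero_fder_escapes_subspace:
  assumes nh: "nhat m f = 0" and a: "a \<in> vec m" "a \<noteq> zero"
    and T: "subspace m T" "T \<noteq> vec m"
  shows "\<exists>u\<in>vec m. \<exists>u'\<in>vec m. vadd (fder f a u) (fder f a u') \<notin> T"
proof (rule ccontr)
  assume "\<not> ?thesis"
  hence inT: "vadd (fder f a u) (fder f a zero) \<in> T" if "u \<in> vec m" for u
    using that by blast
  obtain v where v: "v \<in> vec m" "v \<noteq> zero" "\<forall>t\<in>T. \<not> ip m t v"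
    using proper_subspace_annihilator[OF T] by blast
  let ?const = "\<lambda>a. {v \<in> vec m. v \<noteq> zero \<and> (\<exists>c. \<forall>x\<in>vec m. ip m (fder f a x) v = c)}"
  have "ip m (fder f a x) v = ip m (fder f a zero) v" if "x \<in> vec m" for x
    using inT[OF that] v(3) ip_vadd[of m "fder f a x" "fder f a zero" v] by blast
  hence "\<forall>x\<in>vec m. ip m (fder f a x) v = ip m (fder f a zero) v" by blast
  hence "v \<in> ?const a" using v by blast
  hence "0 < card (?const a)" by (auto simp: card_gt_0_iff)
  also have "card (?const a) \<le> nhat m f"
    unfolding nhat_def using a by (intro Max_ge) auto
  finally show False using nh by simp
qed

section \<open>LA partitions as equivalence classes\<close>

definition LA_rel :: "(nat \<Rightarrow> bool) set \<Rightarrow> (nat \<Rightarrow> bool) set \<Rightarrow> (nat \<Rightarrow> bool) set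
    \<Rightarrow> (nat \<Rightarrow> bool) \<Rightarrow> (nat \<Rightarrow> bool) \<Rightarrow> bool" where
  "LA_rel U W1 W2 x y \<longleftrightarrow>
    (x \<in> U \<and> y \<in> U \<and> vadd x y \<in> W1) \<or> (x \<notin> U \<and> y \<notin> U \<and> vadd x y \<in> W2)"

definition LA_class :: "nat \<Rightarrow> (nat \<Rightarrow> bool) set \<Rightarrow> (nat \<Rightarrow> bool) set \<Rightarrow> (nat \<Rightarrow> bool) set
    \<Rightarrow> (nat \<Rightarrow> bool) \<Rightarrow> (nat \<Rightarrow> bool) set" where
  "LA_class n U W1 W2 x = {y \<in> vec n. LA_rel U W1 W2 x y}"

locale LA_partition =
  fixes n :: nat and U W1 W2 :: "(nat \<Rightarrow> bool) set"
  assumes U: "hyperplane n U"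
    and W1: "subspace n W1" "W1 \<subseteq> U" and W2: "subspace n W2" "W2 \<subseteq> U"
begin

lemma U_subspace: "subspace n U"
  using hyperplane_subspace[OF U] .

lemma U_vec: "U \<subseteq> vec n"
  using subspace_vec[OF U_subspace] .

lemma LA_rel_refl: "LA_rel U W1 W2 x x"
  using subspace_zero[OF W1(1)] subspace_zero[OF W2(1)] by (simp add: LA_rel_def)

lemma LA_rel_sym: "LA_rel U W1 W2 x y \<Longrightarrow> LA_rel U W1 W2 y x"
  by (auto simp: LA_rel_def vadd_comm)

lemma LA_rel_trans:
  assumes xy: "LA_rel U W1 W2 x y" and yz: "LA_rel U W1 W2 y z"
  shows "LA_rel U W1 W2 x z"
proof -
  have sum: "vadd x z = vadd (vadd x y) (vadd y z)" by (simp add: vadd_assoc)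
  show ?thesis
    using xy yz subspace_add[OF W1(1), of "vadd x y" "vadd y z"]
      subspace_add[OF W2(1), of "vadd x y" "vadd y z"]
    unfolding LA_rel_def sum by blast
qed

lemma LA_rel_vaddI1: "x \<in> U \<Longrightarrow> a \<in> W1 \<Longrightarrow> LA_rel U W1 W2 x (vadd x a)"
  using W1(2) subspace_vadd_iff(1)[OF U_subspace] by (auto simp: LA_rel_def)

lemma LA_rel_vaddI2: "x \<notin> U \<Longrightarrow> a \<in> W2 \<Longrightarrow> LA_rel U W1 W2 x (vadd x a)"
  using W2(2) subspace_vadd_iff(2)[OF U_subspace] by (auto simp: LA_rel_def)

lemma LA_class_eq: "y \<in> LA_class n U W1 W2 x \<Longrightarrow> LA_class n U W1 W2 y = LA_class n U W1 W2 x"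
  unfolding LA_class_def using LA_rel_sym LA_rel_trans by blast

lemma LA_class_in_U:
  assumes x: "x \<in> U"
  shows "LA_class n U W1 W2 x = coset W1 x"
proof (intro equalityI subsetI)
  fix y assume "y \<in> LA_class n U W1 W2 x"
  hence "vadd x y \<in> W1" using x by (simp add: LA_class_def LA_rel_def)
  thus "y \<in> coset W1 x" by (simp add: mem_coset_iff vadd_comm)
next
  fix y assume "y \<in> coset W1 x"
  hence w: "vadd x y \<in> W1" by (simp add: mem_coset_iff vadd_comm)
  hence "y \<in> U" using W1(2) subspace_vadd_iff(1)[OF U_subspace x] by blast
  thus "y \<in> LA_class n U W1 W2 x" using x w U_vec by (auto simp: LA_class_def LA_rel_def)
qed

lemma LA_class_notin_U:
  assumes xv: "x \<in> vec n" and x: "x \<notin> U"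
  shows "LA_class n U W1 W2 x = coset W2 x"
proof (intro equalityI subsetI)
  fix y assume "y \<in> LA_class n U W1 W2 x"
  hence "vadd x y \<in> W2" using x by (simp add: LA_class_def LA_rel_def)
  thus "y \<in> coset W2 x" by (simp add: mem_coset_iff vadd_comm)
next
  fix y assume "y \<in> coset W2 x"
  hence w: "vadd x y \<in> W2" by (simp add: mem_coset_iff vadd_comm)
  hence wU: "vadd x y \<in> U" using W2(2) by blast
  have "y \<notin> U"
  proof
    assume "y \<in> U"
    hence "x \<in> U" using wU subspace_vadd_iff(2)[OF U_subspace] by blast
    thus False using x by blast
  qed
  moreover have "y \<in> vec n"
    using vadd_vec[OF xv, of "vadd x y"] wU U_vec by auto
  ultimately show "y \<in> LA_class n U W1 W2 x" using x w by (simp add: LA_class_def LA_rel_def)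
qed

lemma LA_eq_classes: "LA n U W1 W2 = {LA_class n U W1 W2 x | x. x \<in> vec n}"
proof -
  define vb where "vb = (SOME v. v \<in> vec n \<and> v \<notin> U)"
  have vb: "vb \<in> vec n" "vb \<notin> U"
    using someI_ex[OF hyperplane_proper[OF U, unfolded Bex_def]] by (auto simp: vb_def)
  have out: "vadd vb v \<notin> U" if "v \<in> U" for v
    using that vb subspace_vadd_iff(2)[OF U_subspace] by blast
  have "LA n U W1 W2 = {coset W1 v | v. v \<in> U} \<union> {coset W2 (vadd vb v) | v. v \<in> U}"
    by (simp add: LA_def vb_def Let_def coset_coset)
  also have "\<dots> = {LA_class n U W1 W2 x | x. x \<in> vec n}"
  proof (intro equalityI subsetI)
    fix X assume "X \<in> {coset W1 v | v. v \<in> U} \<union> {coset W2 (vadd vb v) | v. v \<in> U}"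
    then consider v where "v \<in> U" "X = coset W1 v" | v where "v \<in> U" "X = coset W2 (vadd vb v)"
      by blast
    thus "X \<in> {LA_class n U W1 W2 x | x. x \<in> vec n}"
    proof cases
      case 1
      thus ?thesis using LA_class_in_U U_vec by blast
    next
      case 2
      hence "vadd vb v \<in> vec n" using vb(1) U_vec by blast
      thus ?thesis using 2 LA_class_notin_U[OF _ out] by blast
    qed
  next
    fix X assume "X \<in> {LA_class n U W1 W2 x | x. x \<in> vec n}"
    then obtain x where x: "x \<in> vec n" "X = LA_class n U W1 W2 x" by blast
    show "X \<in> {coset W1 v | v. v \<in> U} \<union> {coset W2 (vadd vb v) | v. v \<in> U}"
    proof (cases "x \<in> U")
      case True
      thus ?thesis using x LA_class_in_U by blast
    next
      case False
      hence "vadd vb x \<in> U" using hyperplane_add_outside[OF U vb x(1)] by blast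
      moreover have "X = coset W2 (vadd vb (vadd vb x))" using x False LA_class_notin_U by simp
      ultimately show ?thesis by blast
    qed
  qed
  finally show ?thesis .
qed

lemma LA_eq_lin_part:
  assumes "W1 = W2"
  shows "LA n U W1 W2 = lin_part n W1"
proof -
  have "LA_class n U W1 W2 x = coset W1 x" if "x \<in> vec n" for x
    using LA_class_in_U LA_class_notin_U that assms by (cases "x \<in> U") auto
  hence "{LA_class n U W1 W2 x | x. x \<in> vec n} = {coset W1 x | x. x \<in> vec n}" by blast
  thus ?thesis unfolding LA_eq_classes lin_part_def .
qed

lemma LA_eq_singletons:
  assumes "W1 = {zero}" "W2 = {zero}"
  shows "LA n U W1 W2 = {{v} | v. v \<in> vec n}"
proof -
  have "coset {zero} v = {v}" for v by (simp add: coset_def)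
  thus ?thesis using LA_eq_lin_part assms by (simp add: lin_part_def)
qed

end

lemma LA_class_image:
  assumes A: "LA_partition n U W1 W2" and B: "LA_partition n U' W1' W2'"
    and maps: "maps_onto f (LA n U W1 W2) (LA n U' W1' W2')" and x: "x \<in> vec n"
  shows "f ` LA_class n U W1 W2 x = LA_class n U' W1' W2' (f x)"
proof -
  have "LA_class n U W1 W2 x \<in> LA n U W1 W2"
    using x unfolding LA_partition.LA_eq_classes[OF A] by blast
  hence "f ` LA_class n U W1 W2 x \<in> LA n U' W1' W2'"
    using maps unfolding maps_onto_def by blast
  then obtain z where z: "f ` LA_class n U W1 W2 x = LA_class n U' W1' W2' z"
    unfolding LA_partition.LA_eq_classes[OF B] by blast
  have "x \<in> LA_class n U W1 W2 x"
    using x LA_partition.LA_rel_refl[OF A] by (simp add: LA_class_def)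
  hence "f x \<in> LA_class n U' W1' W2' z" using z by blast
  hence "LA_class n U' W1' W2' (f x) = LA_class n U' W1' W2' z"
    by (rule LA_partition.LA_class_eq[OF B])
  thus ?thesis using z by simp
qed

lemma LA_rel_image:
  assumes A: "LA_partition n U W1 W2" and B: "LA_partition n U' W1' W2'"
    and bij: "bij_betw f (vec n) (vec n)" and maps: "maps_onto f (LA n U W1 W2) (LA n U' W1' W2')"
    and x: "x \<in> vec n" and y: "y \<in> vec n"
  shows "LA_rel U W1 W2 x y \<longleftrightarrow> LA_rel U' W1' W2' (f x) (f y)"
proof -
  have "LA_rel U W1 W2 x y \<longleftrightarrow> y \<in> LA_class n U W1 W2 x"
    using y by (simp add: LA_class_def)
  also have "\<dots> \<longleftrightarrow> f y \<in> f ` LA_class n U W1 W2 x"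
    using inj_on_image_mem_iff[OF bij_betw_imp_inj_on[OF bij] y] by (simp add: LA_class_def)
  also have "\<dots> \<longleftrightarrow> f y \<in> LA_class n U' W1' W2' (f x)"
    unfolding LA_class_image[OF A B maps x] ..
  also have "\<dots> \<longleftrightarrow> LA_rel U' W1' W2' (f x) (f y)"
    using bij_betw_apply[OF bij y] by (simp add: LA_class_def)
  finally show ?thesis .
qed

lemma LA_rel_blk_slice:
  assumes "u \<in> vec m" "u' \<in> vec m"
  shows "LA_rel (blk_slice m j U) (blk_slice m j W1) (blk_slice m j W2) u u'
    \<longleftrightarrow> LA_rel U W1 W2 (blk_emb m j u) (blk_emb m j u')"
  using assms by (simp add: LA_rel_def blk_slice_def blk_upd_vadd)

section \<open>LA partitions of one block mapped onto linear partitions\<close>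

lemma bij_betw_image_eq_of_mem_iff:
  assumes bij: "bij_betw f V V" and A: "A \<subseteq> V" and B: "B \<subseteq> V"
    and mem: "\<And>u. u \<in> V \<Longrightarrow> u \<in> A \<longleftrightarrow> f u \<in> B"
  shows "f ` A = B"
proof
  show "f ` A \<subseteq> B" using A mem by blast
  show "B \<subseteq> f ` A"
  proof
    fix w assume w: "w \<in> B"
    hence "w \<in> f ` V" using B bij_betw_imp_surj_on[OF bij] by auto
    then obtain u where "u \<in> V" "w = f u" by (rule imageE)
    thus "w \<in> f ` A" using mem w by blast
  qed
qed

locale LA_to_linear = LA_partition m H X1 X2
  for m :: nat and H X1 X2 :: "(nat \<Rightarrow> bool) set" +
  fixes f :: "(nat \<Rightarrow> bool) \<Rightarrow> (nat \<Rightarrow> bool)" and Y :: "(nat \<Rightarrow> bool) set"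
  assumes bij: "bij_betw f (vec m) (vec m)" and f_zero: "f zero = zero"
    and Y: "subspace m Y"
    and rel: "\<And>u u'. u \<in> vec m \<Longrightarrow> u' \<in> vec m \<Longrightarrow>
      LA_rel H X1 X2 u u' \<longleftrightarrow> vadd (f u) (f u') \<in> Y"
begin

lemma f_vec: "u \<in> vec m \<Longrightarrow> f u \<in> vec m"
  using bij_betw_apply[OF bij] .

lemma f_eq_iff: "u \<in> vec m \<Longrightarrow> u' \<in> vec m \<Longrightarrow> f u = f u' \<longleftrightarrow> u = u'"
  by (rule inj_on_eq_iff[OF bij_betw_imp_inj_on[OF bij]])

lemma X1_vec: "X1 \<subseteq> vec m" and X2_vec: "X2 \<subseteq> vec m" and Y_vec: "Y \<subseteq> vec m"
  using W1(2) W2(2) U_vec subspace_vec[OF Y] by auto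

lemma image_X1: "f ` X1 = Y"
proof (rule bij_betw_image_eq_of_mem_iff[OF bij X1_vec Y_vec])
  fix u assume "u \<in> vec m"
  thus "u \<in> X1 \<longleftrightarrow> f u \<in> Y"
    using rel[OF zero_vec] subspace_zero[OF U_subspace] f_zero W1(2) by (auto simp: LA_rel_def)
qed

lemma image_coset_X2:
  assumes h: "h \<in> vec m" "h \<notin> H"
  shows "f ` coset X2 h = coset Y (f h)"
proof (rule bij_betw_image_eq_of_mem_iff[OF bij])
  show "coset X2 h \<subseteq> vec m" "coset Y (f h) \<subseteq> vec m"
    using X2_vec Y_vec h f_vec by (auto simp: coset_def)
next
  fix u assume u: "u \<in> vec m"
  have "u \<in> coset X2 h \<longleftrightarrow> LA_rel H X1 X2 h u"
    using u LA_class_notin_U[OF h] by (auto simp: LA_class_def)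
  also have "\<dots> \<longleftrightarrow> f u \<in> coset Y (f h)"
    using rel[OF h(1) u] by (simp add: mem_coset_iff vadd_comm)
  finally show "u \<in> coset X2 h \<longleftrightarrow> f u \<in> coset Y (f h)" .
qed

lemma card_X1: "card X1 = card Y"
  using image_X1 card_image inj_on_subset[OF bij_betw_imp_inj_on[OF bij] X1_vec] by metis

lemma card_X2: "card X2 = card Y"
proof -
  obtain h where h: "h \<in> vec m" "h \<notin> H" using hyperplane_proper[OF U] by blast
  have "coset X2 h \<subseteq> vec m" using X2_vec h by (auto simp: coset_def)
  hence "card (f ` coset X2 h) = card (coset X2 h)"
    using card_image inj_on_subset[OF bij_betw_imp_inj_on[OF bij]] by metis
  thus ?thesis using image_coset_X2[OF h] card_coset by metis
qed

lemma fder_X1_in_Y: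
  assumes "a \<in> X1" "u \<in> H"
  shows "fder f a u \<in> Y"
proof -
  have "LA_rel H X1 X2 u (vadd u a)" using assms(2,1) by (rule LA_rel_vaddI1)
  hence "vadd (f u) (f (vadd u a)) \<in> Y" using rel assms U_vec X1_vec by blast
  thus ?thesis by (simp add: fder_def vadd_comm)
qed

lemma fder_X2_in_Y:
  assumes "a \<in> X2" "u \<in> vec m" "u \<notin> H"
  shows "fder f a u \<in> Y"
proof -
  have "LA_rel H X1 X2 u (vadd u a)" using assms(3,1) by (rule LA_rel_vaddI2)
  hence "vadd (f u) (f (vadd u a)) \<in> Y" using rel assms X2_vec by blast
  thus ?thesis by (simp add: fder_def vadd_comm)
qed

lemma card_H_le:
  assumes a: "a \<in> X1" "a \<noteq> zero"
  shows "card H \<le> diff_unif m f * (card Y - 1)"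
proof -
  let ?fiber = "\<lambda>w. {x \<in> vec m. fder f a x = w}"
  have av: "a \<in> vec m" using a X1_vec by blast
  have nonzero: "fder f a u \<noteq> zero" if u: "u \<in> vec m" for u
  proof
    assume "fder f a u = zero"
    hence "f (vadd u a) = f u" by (simp add: fder_def vadd_eq_zero_iff)
    hence "vadd u a = u" using f_eq_iff[OF vadd_vec[OF u av] u] by blast
    thus False using a(2) by simp
  qed
  have "H \<subseteq> (\<Union>w\<in>Y - {zero}. ?fiber w)"
  proof
    fix u assume u: "u \<in> H"
    hence "u \<in> vec m" using U_vec by blast
    thus "u \<in> (\<Union>w\<in>Y - {zero}. ?fiber w)" using fder_X1_in_Y[OF a(1) u] nonzero by blast
  qed
  moreover have "finite (\<Union>w\<in>Y - {zero}. ?fiber w)"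
    by (rule finite_subset[of _ "vec m"]) auto
  ultimately have "card H \<le> card (\<Union>w\<in>Y - {zero}. ?fiber w)"
    by (simp add: card_mono)
  also have "\<dots> \<le> (\<Sum>w\<in>Y - {zero}. card (?fiber w))"
    by (rule card_UN_le) (simp add: subspace_finite[OF Y])
  also have "\<dots> \<le> (\<Sum>w\<in>Y - {zero}. diff_unif m f)"
  proof (rule sum_mono)
    fix w assume "w \<in> Y - {zero}"
    hence "w \<in> vec m" using Y_vec by blast
    thus "card (?fiber w) \<le> diff_unif m f" by (rule card_fder_fiber_le_diff_unif[OF av a(2)])
  qed
  also have "\<dots> = diff_unif m f * (card Y - 1)"
    using subspace_finite[OF Y] subspace_zero[OF Y] by simp
  finally show ?thesis .
qed

text \<open>If X1 and X2 met trivially, |H| would be at least |X1| |X2| = |Y|^2 and at most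
  4 (|Y| - 1), which forces |Y| = 2 and |H| \<le> 4; but |H| = 2^(m-1) \<ge> 8.\<close>

lemma X1_inter_X2_nontrivial:
  assumes du: "diff_unif m f \<le> 4" and m: "4 \<le> m" and Y_ne: "Y \<noteq> {zero}"
  shows "\<exists>a\<in>X1 \<inter> X2. a \<noteq> zero"
proof (rule ccontr)
  assume "\<not> ?thesis"
  hence trivial: "X1 \<inter> X2 \<subseteq> {zero}" by blast
  have "(2::nat) ^ 4 \<le> 2 ^ m" using m by (intro power_increasing) auto
  hence H8: "8 \<le> card H" using card_hyperplane[OF U] by simp
  obtain y where "y \<in> Y" "y \<noteq> zero" using Y_ne subspace_zero[OF Y] by blast
  hence "card {zero, y} \<le> card Y"
    using subspace_zero[OF Y] subspace_finite[OF Y] by (intro card_mono) auto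
  hence Y2: "2 \<le> card Y" using \<open>y \<noteq> zero\<close> by simp
  obtain a where a: "a \<in> X1" "a \<noteq> zero"
  proof -
    have "\<not> X1 \<subseteq> {zero}"
    proof
      assume "X1 \<subseteq> {zero}"
      hence "card X1 \<le> 1" using card_mono[of "{zero}" X1] by simp
      thus False using card_X1 Y2 by simp
    qed
    thus ?thesis using that by blast
  qed
  have bound: "card H \<le> 4 * (card Y - 1)"
    using card_H_le[OF a] mult_le_mono1[OF du, of "card Y - 1"] by linarith
  moreover have "card Y * card Y \<le> card H"
    using card_mult_le_of_inter_trivial[OF W1(1) W2(1) U_subspace W1(2) W2(2) trivial]
      card_X1 card_X2 by simp
  ultimately have square: "card Y * card Y \<le> 4 * (card Y - 1)" by simp
  show False
  proof (cases "card Y = 2")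
    case True
    thus False using bound H8 by simp
  next
    case False
    define z where "z = card Y - 3"
    have "card Y = z + 3" using False Y2 by (simp add: z_def)
    thus False using square by (simp add: algebra_simps)
  qed
qed

lemma Y_eq_zero:
  assumes du: "diff_unif m f \<le> 4" and nh: "nhat m f = 0" and m: "4 \<le> m"
  shows "Y = {zero}"
proof (rule ccontr)
  assume "Y \<noteq> {zero}"
  then obtain a where a: "a \<in> X1" "a \<in> X2" "a \<noteq> zero"
    using X1_inter_X2_nontrivial[OF du m] by blast
  have av: "a \<in> vec m" using a X1_vec by blast
  have fder_Y: "fder f a u \<in> Y" if "u \<in> vec m" for u
    using fder_X1_in_Y[OF a(1)] fder_X2_in_Y[OF a(2) that] by (cases "u \<in> H") auto
  have "Y \<noteq> vec m"
  proof
    assume "Y = vec m"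
    hence "card X1 = 2 ^ m" using card_X1 card_vec by simp
    moreover have "card X1 \<le> card H"
      using W1(2) subspace_finite[OF U_subspace] by (rule card_mono[rotated])
    ultimately show False using card_hyperplane[OF U] zero_less_power[of "2::nat" m] by linarith
  qed
  then obtain u u' where "u \<in> vec m" "u' \<in> vec m" "vadd (fder f a u) (fder f a u') \<notin> Y"
    using nhat_zero_fder_escapes_subspace[OF nh av a(3) Y] by blast
  thus False using fder_Y subspace_add[OF Y] by blast
qed

end

section \<open>Parallel maps between LA partitions\<close>

locale parallel_LA_map =
  fixes m b :: nat and g :: "nat \<Rightarrow> (nat \<Rightarrow> bool) \<Rightarrow> (nat \<Rightarrow> bool)"
    and U W1 W2 U' W1' W2' :: "(nat \<Rightarrow> bool) set"
  assumes m: "4 \<le> m"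
    and bij: "\<And>i. i < b \<Longrightarrow> bij_betw (g i) (vec m) (vec m)"
    and par_zero: "par m b g zero = zero"
    and du: "\<And>i. i < b \<Longrightarrow> diff_unif m (g i) \<le> 4"
    and nh: "\<And>i. i < b \<Longrightarrow> nhat m (g i) = 0"
    and A: "LA_partition (m * b) U W1 W2" and B: "LA_partition (m * b) U' W1' W2'"
    and maps: "maps_onto (par m b g) (LA (m * b) U W1 W2) (LA (m * b) U' W1' W2')"
    and disj: "J m b U \<inter> J m b U' = {}"
begin

abbreviation \<gamma> :: "(nat \<Rightarrow> bool) \<Rightarrow> (nat \<Rightarrow> bool)" where
  "\<gamma> \<equiv> par m b g"

sublocale A: LA_partition "m * b" U W1 W2 by (rule A)
sublocale B: LA_partition "m * b" U' W1' W2' by (rule B)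

lemma m_pos: "0 < m"
  using m by simp

lemma g_vec: "i < b \<Longrightarrow> w \<in> vec m \<Longrightarrow> g i w \<in> vec m"
  using bij_betw_apply[OF bij] .

lemma g_zero: "i < b \<Longrightarrow> g i zero = zero"
  using par_zero_components[OF m_pos par_zero _ g_vec[OF _ zero_vec]] .

lemma bij_gamma: "bij_betw \<gamma> (vec (m * b)) (vec (m * b))"
  using bij_betw_par[OF m_pos bij] .

lemma blk_gamma:
  assumes i: "i < b"
  shows "blk m i (\<gamma> x) = g i (blk m i x)"
  using blk_par[where g = g and x = x, OF m_pos i g_vec[OF i blk_vec]] .

lemma gamma_blk_upd:
  "j < b \<Longrightarrow> u \<in> vec m \<Longrightarrow> x \<in> vec (m * b) \<Longrightarrow> \<gamma> (blk_upd m j u x) = blk_upd m j (g j u) (\<gamma> x)"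
  using par_blk_upd[OF m_pos _ _ _ g_vec] .

lemma gamma_blk_emb: "j < b \<Longrightarrow> u \<in> vec m \<Longrightarrow> \<gamma> (blk_emb m j u) = blk_emb m j (g j u)"
  using par_blk_emb[OF m_pos _ _ g_vec par_zero] .

lemma gamma_rel:
  "x \<in> vec (m * b) \<Longrightarrow> y \<in> vec (m * b) \<Longrightarrow>
    LA_rel U W1 W2 x y \<longleftrightarrow> LA_rel U' W1' W2' (\<gamma> x) (\<gamma> y)"
  using LA_rel_image[OF A B bij_gamma maps] .

lemma fder_gamma_mem:
  assumes y: "y \<in> vec (m * b)" and a: "a \<in> vec (m * b)" and rel: "LA_rel U W1 W2 y (vadd y a)"
  shows "fder \<gamma> a y \<in> (if \<gamma> y \<in> U' then W1' else W2')"
proof -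
  have "LA_rel U' W1' W2' (\<gamma> y) (\<gamma> (vadd y a))" using rel gamma_rel y a by blast
  thus ?thesis by (auto simp: LA_rel_def fder_def vadd_comm)
qed

lemma blk_emb_in_of_fder_gamma:
  assumes j: "j < b" and a: "blk m j a \<noteq> zero" and W: "subspace (m * b) W"
    and fder_in: "\<And>u. u \<in> vec m \<Longrightarrow> fder \<gamma> a (blk_upd m j u x) \<in> W"
    and w: "w \<in> vec m"
  shows "blk_emb m j w \<in> W"
proof (rule ccontr)
  let ?d = "fder (g j) (blk m j a)"
  assume "blk_emb m j w \<notin> W"
  hence "blk_slice m j W \<noteq> vec m" using w by (auto simp: blk_slice_def)
  then obtain u u' where u: "u \<in> vec m" "u' \<in> vec m" and out: "vadd (?d u) (?d u') \<notin> blk_slice m j W"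
    using nhat_zero_fder_escapes_subspace[OF nh[OF j] blk_vec a subspace_blk_slice[OF W]] by blast
  have "blk_emb m j (vadd (?d u) (?d u')) \<in> W"
    using subspace_add[OF W fder_in[OF u(1)] fder_in[OF u(2)]] fder_par_blk_upd[OF m_pos j u g_vec]
    by simp
  moreover have "vadd (?d u) (?d u') \<in> vec m"
    using g_vec[OF j] u by (simp add: fder_def)
  ultimately show False using out by (simp add: blk_slice_def)
qed

lemma LA_rel_along_block:
  assumes j: "j < b" "j \<notin> J m b U" and x: "blk m j x = zero" and u: "u \<in> vec m"
    and side: "(x \<in> U \<and> a \<in> W1) \<or> (x \<notin> U \<and> a \<in> W2)"
  shows "LA_rel U W1 W2 (blk_upd m j u x) (vadd (blk_upd m j u x) a)"
proof -
  have "blk_upd m j u x \<in> U \<longleftrightarrow> x \<in> U"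
    using blk_upd_mem_iff[OF m_pos A.U_subspace x blk_emb_mem_of_notin_J[OF m_pos j u]] .
  thus ?thesis using side A.LA_rel_vaddI1 A.LA_rel_vaddI2 by auto
qed

text \<open>Moving the base point x inside a block j that lies in both U and U' keeps both x and its
  image on their sides of U and U', so all derivatives in direction a land in one subspace.\<close>

lemma blk_emb_in_image_side:
  assumes j: "j < b" "j \<notin> J m b U" "j \<notin> J m b U'" and a: "a \<in> vec (m * b)" "blk m j a \<noteq> zero"
    and x: "x \<in> vec (m * b)" "blk m j x = zero"
    and side: "(x \<in> U \<and> a \<in> W1) \<or> (x \<notin> U \<and> a \<in> W2)" and w: "w \<in> vec m"
  shows "blk_emb m j w \<in> (if \<gamma> x \<in> U' then W1' else W2')"
proof (rule blk_emb_in_of_fder_gamma[OF j(1) a(2) _ _ w])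
  show "subspace (m * b) (if \<gamma> x \<in> U' then W1' else W2')"
    using B.W1(1) B.W2(1) by simp
next
  fix u assume u: "u \<in> vec m"
  have y: "blk_upd m j u x \<in> vec (m * b)" using m_pos j(1) x(1) by simp
  have "blk m j (\<gamma> x) = zero" using blk_gamma[OF j(1)] x(2) g_zero[OF j(1)] by simp
  hence "\<gamma> (blk_upd m j u x) \<in> U' \<longleftrightarrow> \<gamma> x \<in> U'"
    unfolding gamma_blk_upd[OF j(1) u x(1)]
    using blk_upd_mem_iff[OF m_pos B.U_subspace _ blk_emb_mem_of_notin_J[OF m_pos j(1,3) g_vec[OF j(1) u]]]
    by blast
  thus "fder \<gamma> a (blk_upd m j u x) \<in> (if \<gamma> x \<in> U' then W1' else W2')"
    using fder_gamma_mem[OF y a(1) LA_rel_along_block[OF j(1,2) x(2) u side]] by simp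
qed

lemma exists_point_in_U_image_notin_U':
  obtains k v where "k \<in> J m b U'" "v \<in> vec m" "blk_emb m k v \<in> U" "\<gamma> (blk_emb m k v) \<notin> U'"
proof -
  obtain v0 where "v0 \<in> vec (m * b)" "v0 \<notin> U'" using hyperplane_proper[OF B.U] by blast
  then obtain k where k: "k \<in> J m b U'"
    using exists_J[OF m_pos B.U_subspace] by blast
  then obtain w where kb: "k < b" and w: "w \<in> vec m" "blk_emb m k w \<notin> U'"
    using mem_J_iff[OF m_pos] by blast
  obtain v where v: "v \<in> vec m" "g k v = w"
    using w(1) bij_betw_imp_surj_on[OF bij[OF kb]] by (metis imageE)
  have "blk_emb m k v \<in> U"
    using k disj blk_emb_mem_of_notin_J[OF m_pos kb _ v(1)] by blast
  moreover have "\<gamma> (blk_emb m k v) \<notin> U'" using gamma_blk_emb[OF kb v(1)] v(2) w(2) by simp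
  ultimately show ?thesis using that k v(1) by blast
qed

lemma exists_point_notin_U_image_in_U':
  obtains k u where "k \<in> J m b U" "u \<in> vec m" "blk_emb m k u \<notin> U" "\<gamma> (blk_emb m k u) \<in> U'"
proof -
  obtain v0 where "v0 \<in> vec (m * b)" "v0 \<notin> U" using hyperplane_proper[OF A.U] by blast
  then obtain k where k: "k \<in> J m b U"
    using exists_J[OF m_pos A.U_subspace] by blast
  then obtain u where kb: "k < b" and u: "u \<in> vec m" "blk_emb m k u \<notin> U"
    using mem_J_iff[OF m_pos] by blast
  have "\<gamma> (blk_emb m k u) \<in> U'"
    using k disj gamma_blk_emb[OF kb u(1)] blk_emb_mem_of_notin_J[OF m_pos kb _ g_vec[OF kb u(1)]]
    by auto
  thus ?thesis using that k u by blast
qed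

lemma exists_point_notin_U_image_notin_U':
  obtains x where "x \<in> vec (m * b)" "x \<notin> U" "\<gamma> x \<notin> U'"
proof -
  obtain k u where k: "k \<in> J m b U" and u: "u \<in> vec m" "blk_emb m k u \<notin> U" "\<gamma> (blk_emb m k u) \<in> U'"
    by (rule exists_point_notin_U_image_in_U')
  obtain k' v where k': "k' \<in> J m b U'" and v: "v \<in> vec m" "blk_emb m k' v \<in> U" "\<gamma> (blk_emb m k' v) \<notin> U'"
    by (rule exists_point_in_U_image_notin_U')
  have kb: "k < b" "k' < b" using k k' mem_J_iff[OF m_pos] by blast+
  have "k \<noteq> k'" using k k' disj by blast
  hence blk0: "blk m k' (blk_emb m k u) = zero" "blk m k' (\<gamma> (blk_emb m k u)) = zero"
    using m_pos gamma_blk_emb[OF kb(1) u(1)] by simp_all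
  define x where "x = blk_upd m k' v (blk_emb m k u)"
  have "x = vadd (blk_emb m k u) (blk_emb m k' v)"
    unfolding x_def by (rule blk_upd_eq_vadd_emb[OF m_pos blk0(1)])
  hence "x \<notin> U" using u(2) subspace_vadd_iff(2)[OF A.U_subspace v(2)] by simp
  moreover have "\<gamma> x = vadd (\<gamma> (blk_emb m k u)) (\<gamma> (blk_emb m k' v))"
    unfolding x_def gamma_blk_upd[OF kb(2) v(1) blk_upd_vec[OF m_pos kb(1) zero_vec]]
      gamma_blk_emb[OF kb(2) v(1)] by (rule blk_upd_eq_vadd_emb[OF m_pos blk0(2)])
  hence "\<gamma> x \<notin> U'" using u(3) v(3) subspace_vadd_iff(1)[OF B.U_subspace] by simp
  moreover have "x \<in> vec (m * b)" unfolding x_def using m_pos kb by simp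
  ultimately show ?thesis using that by blast
qed

lemma blk_zero_on_J':
  assumes a: "a \<in> W1 \<union> W2" and j: "j \<in> J m b U'"
  shows "blk m j a = zero"
proof (rule ccontr)
  assume a_j: "blk m j a \<noteq> zero"
  have jb: "j < b" using j mem_J_iff[OF m_pos] by blast
  have jU: "j \<notin> J m b U" using j disj by blast
  have av: "a \<in> vec (m * b)" using a A.W1(2) A.W2(2) A.U_vec by blast
  obtain x where x: "x \<in> vec (m * b)" "blk m j x = zero"
    and side: "(x \<in> U \<and> a \<in> W1) \<or> (x \<notin> U \<and> a \<in> W2)"
  proof (cases "a \<in> W1")
    case True
    thus ?thesis using that[of zero] subspace_zero[OF A.U_subspace] by simp
  next
    case False
    obtain k u where "k \<in> J m b U" "u \<in> vec m" "blk_emb m k u \<notin> U"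
      by (rule exists_point_notin_U_image_in_U')
    moreover have "k \<noteq> j" "k < b" using calculation(1) jU mem_J_iff[OF m_pos] by blast+
    ultimately show ?thesis using that[of "blk_emb m k u"] False a m_pos by simp
  qed
  have "blk_emb m j w \<in> U'" if "w \<in> vec m" for w
  proof (rule blk_emb_in_of_fder_gamma[OF jb a_j B.U_subspace _ that])
    fix u assume u: "u \<in> vec m"
    have "blk_upd m j u x \<in> vec (m * b)" using m_pos jb x(1) by simp
    thus "fder \<gamma> a (blk_upd m j u x) \<in> U'"
      using fder_gamma_mem[OF _ av LA_rel_along_block[OF jb jU x(2) u side]] B.W1(2) B.W2(2)
      by (auto split: if_splits)
  qed
  thus False using j mem_J_iff[OF m_pos] by blast
qed

lemma LA_to_linear_blk_slice:
  assumes j: "j \<in> J m b U"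
  shows "LA_to_linear m (blk_slice m j U) (blk_slice m j W1) (blk_slice m j W2) (g j) (blk_slice m j W1')"
proof -
  have jb: "j < b" using j mem_J_iff[OF m_pos] by blast
  have jU': "j \<notin> J m b U'" using j disj by blast
  show ?thesis
  proof (intro LA_to_linear.intro LA_partition.intro LA_to_linear_axioms.intro)
    show "hyperplane m (blk_slice m j U)" by (rule hyperplane_blk_slice[OF m_pos A.U j])
    show "subspace m (blk_slice m j W1)" "subspace m (blk_slice m j W2)" "subspace m (blk_slice m j W1')"
      using subspace_blk_slice A.W1(1) A.W2(1) B.W1(1) by blast+
    show "blk_slice m j W1 \<subseteq> blk_slice m j U" "blk_slice m j W2 \<subseteq> blk_slice m j U"
      using A.W1(2) A.W2(2) by (auto simp: blk_slice_def)
    show "bij_betw (g j) (vec m) (vec m)" "g j zero = zero" using bij g_zero jb by auto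
  next
    fix u u' assume u: "u \<in> vec m" and u': "u' \<in> vec m"
    have in_U': "blk_emb m j (g j v) \<in> U'" if "v \<in> vec m" for v
      using blk_emb_mem_of_notin_J[OF m_pos jb jU' g_vec[OF jb that]] .
    have "LA_rel (blk_slice m j U) (blk_slice m j W1) (blk_slice m j W2) u u'
        \<longleftrightarrow> LA_rel U W1 W2 (blk_emb m j u) (blk_emb m j u')"
      by (rule LA_rel_blk_slice[OF u u'])
    also have "\<dots> \<longleftrightarrow> LA_rel U' W1' W2' (blk_emb m j (g j u)) (blk_emb m j (g j u'))"
      using gamma_rel m_pos jb u u' by (simp add: gamma_blk_emb)
    also have "\<dots> \<longleftrightarrow> vadd (g j u) (g j u') \<in> blk_slice m j W1'"
      using in_U'[OF u] in_U'[OF u'] g_vec[OF jb] u u' by (simp add: LA_rel_def blk_slice_def blk_upd_vadd)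
    finally show "LA_rel (blk_slice m j U) (blk_slice m j W1) (blk_slice m j W2) u u'
        \<longleftrightarrow> vadd (g j u) (g j u') \<in> blk_slice m j W1'" .
  qed
qed

lemma card_le_diff_unif_of_fder_gamma:
  assumes j: "j < b" and a_j: "blk m j a \<noteq> zero"
    and W: "subspace (m * b) W" and W0: "blk_slice m j W = {zero}"
    and D: "D \<subseteq> vec m" and in_W: "\<And>u. u \<in> D \<Longrightarrow> fder \<gamma> a (blk_emb m j u) \<in> W"
  shows "card D \<le> diff_unif m (g j)"
proof (cases "D = {}")
  case False
  then obtain u0 where u0: "u0 \<in> D" by blast
  let ?d = "fder (g j) (blk m j a)"
  have "D \<subseteq> {x \<in> vec m. ?d x = ?d u0}"
  proof
    fix u assume u: "u \<in> D"
    have uv: "u \<in> vec m" "u0 \<in> vec m" using u u0 D by auto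
    have "blk_emb m j (vadd (?d u) (?d u0)) \<in> W"
      using subspace_add[OF W in_W[OF u] in_W[OF u0]] fder_par_blk_upd[OF m_pos j uv g_vec]
      by simp
    moreover have "vadd (?d u) (?d u0) \<in> vec m" using g_vec[OF j] uv by (simp add: fder_def)
    ultimately have "vadd (?d u) (?d u0) \<in> blk_slice m j W" by (simp add: blk_slice_def)
    thus "u \<in> {x \<in> vec m. ?d x = ?d u0}" using W0 uv by (auto simp: vadd_eq_zero_iff)
  qed
  hence "card D \<le> card {x \<in> vec m. ?d x = ?d u0}" by (intro card_mono) auto
  also have "\<dots> \<le> diff_unif m (g j)"
    using u0 D g_vec[OF j] a_j by (intro card_fder_fiber_le_diff_unif) (auto simp: fder_def)
  finally show ?thesis .
qed simp

text \<open>If the slice of W1' were trivial, the derivative of g j in direction a_j would be constant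
  on a coset of the hyperplane slice of U, which has at least 8 > 4 elements.\<close>

lemma blk_slice_W1'_nontrivial:
  assumes a: "a \<in> W1 \<union> W2" and j: "j \<in> J m b U" and a_j: "blk m j a \<noteq> zero"
  shows "blk_slice m j W1' \<noteq> {zero}"
proof
  assume Y0: "blk_slice m j W1' = {zero}"
  let ?H = "blk_slice m j U"
  have jb: "j < b" using j mem_J_iff[OF m_pos] by blast
  have jU': "j \<notin> J m b U'" using j disj by blast
  have av: "a \<in> vec (m * b)" using a A.W1(2) A.W2(2) A.U_vec by blast
  have H: "hyperplane m ?H" by (rule hyperplane_blk_slice[OF m_pos A.U j])
  define D where "D = (if a \<in> W1 then ?H else vec m - ?H)"
  have D_vec: "D \<subseteq> vec m" using subspace_vec[OF hyperplane_subspace[OF H]] by (auto simp: D_def)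
  have "(2::nat) ^ 4 \<le> 2 ^ m" using m by (intro power_increasing) auto
  hence D8: "8 \<le> card D"
    using card_hyperplane[OF H] card_compl_hyperplane[OF H] by (simp add: D_def)
  have "fder \<gamma> a (blk_emb m j u) \<in> W1'" if u: "u \<in> D" for u
  proof -
    have uv: "u \<in> vec m" using u D_vec by blast
    have "LA_rel U W1 W2 (blk_emb m j u) (vadd (blk_emb m j u) a)"
      using u a A.LA_rel_vaddI1 A.LA_rel_vaddI2 by (auto simp: D_def blk_slice_def split: if_splits)
    hence "fder \<gamma> a (blk_emb m j u) \<in> (if \<gamma> (blk_emb m j u) \<in> U' then W1' else W2')"
      by (rule fder_gamma_mem[OF blk_upd_vec[OF m_pos jb zero_vec] av])
    moreover have "\<gamma> (blk_emb m j u) \<in> U'"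
      using gamma_blk_emb[OF jb uv] blk_emb_mem_of_notin_J[OF m_pos jb jU' g_vec[OF jb uv]] by simp
    ultimately show ?thesis by simp
  qed
  hence "card D \<le> diff_unif m (g j)"
    by (rule card_le_diff_unif_of_fder_gamma[OF jb a_j B.W1(1) Y0 D_vec])
  thus False using du[OF jb] D8 by simp
qed

lemma blk_zero_on_J:
  assumes a: "a \<in> W1 \<union> W2" and j: "j \<in> J m b U"
  shows "blk m j a = zero"
proof -
  have "j < b" using j mem_J_iff[OF m_pos] by blast
  hence "blk_slice m j W1' = {zero}"
    using LA_to_linear.Y_eq_zero[OF LA_to_linear_blk_slice[OF j] du nh m] by blast
  thus ?thesis using blk_slice_W1'_nontrivial[OF a j] by blast
qed

lemma blk_support_notin_J:
  assumes "a \<in> W1 \<union> W2" "blk m j a \<noteq> zero"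
  shows "j \<notin> J m b U" "j \<notin> J m b U'"
  using assms blk_zero_on_J blk_zero_on_J' by blast+

lemma blk_support_W1_blocks:
  assumes j: "j \<in> blk_support m b W1" and w: "w \<in> vec m"
  shows "blk_emb m j w \<in> W1'" "blk_emb m j w \<in> W2'"
proof -
  obtain a where jb: "j < b" and a: "a \<in> W1" "blk m j a \<noteq> zero"
    using j by (auto simp: blk_support_def)
  have av: "a \<in> vec (m * b)" using a A.W1(2) A.U_vec by blast
  have jJ: "j \<notin> J m b U" "j \<notin> J m b U'" using blk_support_notin_J a by blast+
  show "blk_emb m j w \<in> W1'"
    using blk_emb_in_image_side[OF jb jJ av a(2) zero_vec blk_zero _ w] a(1) par_zero
      subspace_zero[OF A.U_subspace] subspace_zero[OF B.U_subspace] by simp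
  obtain k v where k: "k \<in> J m b U'" and v: "v \<in> vec m" "blk_emb m k v \<in> U" "\<gamma> (blk_emb m k v) \<notin> U'"
    by (rule exists_point_in_U_image_notin_U')
  have "k \<noteq> j" "k < b" using k jJ(2) mem_J_iff[OF m_pos] by blast+
  thus "blk_emb m j w \<in> W2'"
    using blk_emb_in_image_side[OF jb jJ av a(2) _ _ _ w, of "blk_emb m k v"] v a(1) m_pos by simp
qed

lemma blk_support_W2_blocks:
  assumes j: "j \<in> blk_support m b W2" and w: "w \<in> vec m"
  shows "blk_emb m j w \<in> W1'"
proof -
  obtain a where jb: "j < b" and a: "a \<in> W2" "blk m j a \<noteq> zero"
    using j by (auto simp: blk_support_def)
  have av: "a \<in> vec (m * b)" using a A.W2(2) A.U_vec by blast
  have jJ: "j \<notin> J m b U" "j \<notin> J m b U'" using blk_support_notin_J a by blast+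
  obtain k u where k: "k \<in> J m b U" and u: "u \<in> vec m" "blk_emb m k u \<notin> U" "\<gamma> (blk_emb m k u) \<in> U'"
    by (rule exists_point_notin_U_image_in_U')
  have "k \<noteq> j" "k < b" using k jJ(1) mem_J_iff[OF m_pos] by blast+
  thus ?thesis
    using blk_emb_in_image_side[OF jb jJ av a(2) _ _ _ w, of "blk_emb m k u"] u a(1) m_pos by simp
qed

lemma card_W1_eq: "card W1' = card W1"
proof -
  have "\<gamma> ` LA_class (m * b) U W1 W2 zero = LA_class (m * b) U' W1' W2' (\<gamma> zero)"
    by (rule LA_class_image[OF A B maps zero_vec])
  hence "\<gamma> ` W1 = W1'"
    using A.LA_class_in_U[OF subspace_zero[OF A.U_subspace]]
      B.LA_class_in_U[OF subspace_zero[OF B.U_subspace]] par_zero by simp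
  moreover have "W1 \<subseteq> vec (m * b)" using A.W1(2) A.U_vec by blast
  ultimately show ?thesis
    using inj_on_subset[OF bij_betw_imp_inj_on[OF bij_gamma]] card_image by metis
qed

lemma card_W2_eq: "card W2' = card W2"
proof -
  obtain x where x: "x \<in> vec (m * b)" "x \<notin> U" "\<gamma> x \<notin> U'"
    by (rule exists_point_notin_U_image_notin_U')
  have "\<gamma> ` LA_class (m * b) U W1 W2 x = LA_class (m * b) U' W1' W2' (\<gamma> x)"
    by (rule LA_class_image[OF A B maps x(1)])
  hence "\<gamma> ` coset W2 x = coset W2' (\<gamma> x)"
    using A.LA_class_notin_U[OF x(1,2)] B.LA_class_notin_U[OF par_vec x(3)] by simp
  moreover have "coset W2 x \<subseteq> vec (m * b)" using A.LA_class_notin_U[OF x(1,2)]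
    by (auto simp: LA_class_def)
  ultimately have "card (coset W2' (\<gamma> x)) = card (coset W2 x)"
    using inj_on_subset[OF bij_betw_imp_inj_on[OF bij_gamma]] card_image by metis
  thus ?thesis by (simp add: card_coset)
qed

text \<open>The blocks met by W1 lie in W1' and W2', those met by W2 in W1'; comparing cardinalities
  along W1 \<subseteq> wall(W1) \<subseteq> W1' and W2 \<subseteq> wall(W2) \<subseteq> W1' = W1 \<subseteq> W2' closes all inclusions.\<close>

theorem subspaces_eq_wall:
  shows "W1' = W1" "W2 = W1" "W2' = W1" "W1 = wall_set m b (blk_support m b W1)"
proof -
  let ?wall1 = "wall_set m b (blk_support m b W1)" and ?wall2 = "wall_set m b (blk_support m b W2)"
  have wall1_W1': "?wall1 \<subseteq> W1'" and wall1_W2': "?wall1 \<subseteq> W2'" and wall2_W1': "?wall2 \<subseteq> W1'"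
    using wall_set_subset[OF m_pos B.W1(1)] wall_set_subset[OF m_pos B.W2(1)]
      blk_support_W1_blocks blk_support_W2_blocks by blast+
  have W1_wall1: "W1 \<subseteq> ?wall1" and W2_wall2: "W2 \<subseteq> ?wall2"
    using subset_wall_set_blk_support[OF m_pos] A.W1(2) A.W2(2) A.U_vec by blast+
  have fin: "finite W1'" "finite W2'" using subspace_finite B.W1(1) B.W2(1) by blast+
  have W1': "W1 = W1'"
    using card_subset_eq[OF fin(1) subset_trans[OF W1_wall1 wall1_W1'] card_W1_eq[symmetric]] .
  hence wall1: "?wall1 = W1" using W1_wall1 wall1_W1' by blast
  have W2_W1: "W2 \<subseteq> W1" using W2_wall2 wall2_W1' W1' by blast
  have W2': "W2 = W2'"
    using card_subset_eq[OF fin(2) _ card_W2_eq[symmetric]] W2_W1 wall1 wall1_W2' by blast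
  show "W1' = W1" "W2 = W1" "W2' = W1" "W1 = ?wall1"
    using W1' wall1 W2_W1 W2' wall1_W2' by blast+
qed

end

theorem lemma3p17:
  fixes m b :: nat
    and g :: "nat \<Rightarrow> (nat \<Rightarrow> bool) \<Rightarrow> (nat \<Rightarrow> bool)"
    and U W1 W2 U' W1' W2' :: "(nat \<Rightarrow> bool) set"
  assumes b: "b > 1" and m: "m \<ge> 4"
    and perm: "\<forall>i<b. bij_betw (g i) (vec m) (vec m)"
    and zero: "par m b g zero = zero"
    and du: "\<forall>i<b. diff_unif m (g i) = 4"
    and nh: "\<forall>i<b. nhat m (g i) = 0"
    and U: "subspace (m * b) U" "card U = 2 ^ (m * b - 1)"
    and W: "subspace (m * b) W1" "W1 \<subseteq> U" "subspace (m * b) W2" "W2 \<subseteq> U"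
    and U': "subspace (m * b) U'" "card U' = 2 ^ (m * b - 1)"
    and W': "subspace (m * b) W1'" "W1' \<subseteq> U'" "subspace (m * b) W2'" "W2' \<subseteq> U'"
    and maps: "maps_onto (par m b g) (LA (m * b) U W1 W2) (LA (m * b) U' W1' W2')"
    and nontriv: "\<not> trivial_part (m * b) (LA (m * b) U' W1' W2')"
    and disj: "J m b U \<inter> J m b U' = {}"
  shows "wall m b W1 \<and> wall m b W2 \<and> wall m b W1' \<and> wall m b W2' \<and>
         W1 = W1' \<and> W1 = W2 \<and> W1 = W2' \<and>
         LA (m * b) U W1 W2 = lin_part (m * b) W1 \<and>
         LA (m * b) U' W1' W2' = lin_part (m * b) W1'"
proof -
  have m_pos: "0 < m" and n_pos: "0 < m * b" using m b by simp_all
  have A: "LA_partition (m * b) U W1 W2" and B: "LA_partition (m * b) U' W1' W2'"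
    using U U' W W' hyperplane_of_card[OF _ n_pos] by (simp_all add: LA_partition_def)
  interpret P: parallel_LA_map m b g U W1 W2 U' W1' W2'
    by (rule parallel_LA_map.intro) (use m perm zero du nh A B maps disj in auto)
  have "W1 \<noteq> {zero}"
    using nontriv P.subspaces_eq_wall P.B.LA_eq_singletons by (auto simp: trivial_part_def)
  moreover have "W1 \<noteq> vec (m * b)" using W(2) hyperplane_proper[OF P.A.U] by blast
  ultimately have "wall m b W1" by (rule wallI[OF m_pos P.subspaces_eq_wall(4)])
  thus ?thesis using P.subspaces_eq_wall P.A.LA_eq_lin_part P.B.LA_eq_lin_part by simp
qed

end
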